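(* If a pair $(\mathfrak m,\mathfrak m^* )$ of functions $E\to\mathbb C$ on the edges of the lattice strip is imaginary complexified s-holomorphic (ICSH), then the Clifford-generator-valued discrete 1-form $\mathfrak m(z)\psi(z)\,dz+\mathfrak m^*(z)\psi^*(z)\,d\bar z$ is closed.
   Context: Fix integers $a<0<b$, $C=\{a,\dots,b\}$, $C^*=\{a+\frac12,\dots,b-\frac12\}$. $\tilde V$ has orthonormal basis $(e_\rho)_{\rho\in\{\pm1\}^C}$. For $x'\in C^*$, $\varsigma_{x'}(\rho)$ is $\rho$ with the signs of $\rho_x$, $x<x'$, flipped; $\psi_{x'}e_\rho=\frac{-\rho_{x'-1/2}+i\rho_{x'+1/2}}{\sqrt2}e_{\varsigma_{x'}(\rho)}$, $\psi^*_{x'}e_\rho=\frac{-i\rho_{x'-1/2}+\rho_{x'+1/2}}{\sqrt2}e_{\varsigma_{x'}(\rho)}$; $\mathrm{CliffGen}$ is their complex span. With $\beta=\frac12\log(\sqrt2+1)$: $T_h^{1/2}$ diagonal with entries $\exp(\frac\beta2\sum_{x=a}^{b-1}\rho_x\rho_{x+1})$, $e_\tau^\dagger T_ve_\rho=\exp(\beta\sum_{x=a}^b\rho_x\tau_x)\delta_{\tau_a\rho_a}\delta_{\tau_b\rho_b}$, $T=T_h^{1/2}T_vT_h^{1/2}$ (invertible). The lattice strip has vertices $C\times\mathbb Z\subset\mathbb C$, nearest-neighbour edges $E$ identified with their midpoints (horizontal $x'+iy$, vertical $x+iy'$, $y'\in\mathbb Z+\frac12$), faces with centres $p$; vertical edges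 with $x=a$ ($x=b$) are left (right) boundary edges. The fermions $\psi,\psi^*:E\to\mathrm{CliffGen}$ are the unique functions with $\psi(x'+iy)=T^{-y}\psi_{x'}T^y$, $\psi^*(x'+iy)=T^{-y}\psi^*_{x'}T^y$ on horizontal edges such that for any edges $z_1,z_2$ adjacent to a common vertex $v$ and face $p$, $\psi(z_1)+\frac{i|v-p|}{v-p}\psi^*(z_1)=\psi(z_2)+\frac{i|v-p|}{v-p}\psi^*(z_2)$, and $\psi(L)+i\psi^*(L)=0$, $\psi(R)-i\psi^*(R)=0$ on left/right boundary edges $L,R$. For a discrete contour $\gamma=(w_0,\dots,w_m)$ of vertices with $z_j$ the edge joining $w_{j-1},w_j$, define $\int_\gamma(\mathfrak m\psi\,dz+\mathfrak m^*\psi^*\,d\bar z)=\sum_{j=1}^m\big(\mathfrak m(z_j)\psi(z_j)(w_j-w_{j-1})+\mathfrak m^*(z_j)\psi^*(z_j)\overline{(w_j-w_{j-1})}\big)$. The form is closed if this integral vanishes for every counterclockwise plaquette contour $(w_0,w_1,w_2,w_3,w_4=w_0)$ around a face. The pair $(\mathfrak m,\mathfrak m^* )$ is ICSH if for any edges $z_1,z_2$ adjacent to a common vertex $v$ and face $p$: $\mathfrak m(z_1)-\frac{i|v-p|}{v-p}\mathfrak m^*(z_1)=\mathfrak m(z_2)-\frac{i|v-p|}{v-p}\mathfrak m^*(z_2)$. *)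

theory Defs
  imports Complex_Main
begin

text \<open>A spin configuration \<rho> \<in> {+1,-1}^C, C = {a..b}, is represented as a function
  int \<Rightarrow> int with values \<plusminus>1 on C and the value 1 outside C (canonical representative).
  An operator on the space with orthonormal basis (e_\<rho>) is represented by its matrix:
  A \<tau> \<rho> = e_\<tau>^dagger A e_\<rho>; entries vanish outside the configuration set.\<close>

type_synonym spin = "int \<Rightarrow> int"
type_synonym op = "spin \<Rightarrow> spin \<Rightarrow> complex"

definition Conf :: "int \<Rightarrow> int \<Rightarrow> spin set" where
  "Conf a b = {\<rho>. (\<forall>x. a \<le> x \<and> x \<le> b \<longrightarrow> \<rho> x = 1 \<or> \<rho> x = -1)
                 \<and> (\<forall>x. \<not> (a \<le> x \<and> x \<le> b) \<longrightarrow> \<rho> x = 1)}"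

definition is_op :: "int \<Rightarrow> int \<Rightarrow> op \<Rightarrow> bool" where
  "is_op a b A \<longleftrightarrow> (\<forall>\<tau> \<rho>. \<tau> \<notin> Conf a b \<or> \<rho> \<notin> Conf a b \<longrightarrow> A \<tau> \<rho> = 0)"

definition op_zero :: op where "op_zero = (\<lambda>\<tau> \<rho>. 0)"

definition op_add :: "op \<Rightarrow> op \<Rightarrow> op" where
  "op_add A B = (\<lambda>\<tau> \<rho>. A \<tau> \<rho> + B \<tau> \<rho>)"

definition op_scale :: "complex \<Rightarrow> op \<Rightarrow> op" where
  "op_scale c A = (\<lambda>\<tau> \<rho>. c * A \<tau> \<rho>)"

definition op_mult :: "int \<Rightarrow> int \<Rightarrow> op \<Rightarrow> op \<Rightarrow> op" where
  "op_mult a b A B = (\<lambda>\<tau> \<rho>. \<Sum>\<sigma>\<in>Conf a b. A \<tau> \<sigma> * B \<sigma> \<rho>)"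

definition op_id :: "int \<Rightarrow> int \<Rightarrow> op" where
  "op_id a b = (\<lambda>\<tau> \<rho>. if \<tau> = \<rho> \<and> \<rho> \<in> Conf a b then 1 else 0)"

fun op_pow :: "int \<Rightarrow> int \<Rightarrow> op \<Rightarrow> nat \<Rightarrow> op" where
  "op_pow a b A 0 = op_id a b"
| "op_pow a b A (Suc n) = op_mult a b A (op_pow a b A n)"

definition op_inv :: "int \<Rightarrow> int \<Rightarrow> op \<Rightarrow> op" where
  "op_inv a b A = (THE B. is_op a b B \<and> op_mult a b A B = op_id a b \<and> op_mult a b B A = op_id a b)"

definition op_zpow :: "int \<Rightarrow> int \<Rightarrow> op \<Rightarrow> int \<Rightarrow> op" where
  "op_zpow a b A y = (if 0 \<le> y then op_pow a b A (nat y) else op_pow a b (op_inv a b A) (nat (- y)))"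

text \<open>The half-integer x' = k + 1/2 \<in> C* (a \<le> k < b) is indexed by the integer k.
  flip a k \<rho> = \<varsigma>_{x'}(\<rho>): the signs of \<rho>_x for x < x' (i.e. a \<le> x \<le> k) are flipped.\<close>

definition flip :: "int \<Rightarrow> int \<Rightarrow> spin \<Rightarrow> spin" where
  "flip a k \<rho> = (\<lambda>x. if a \<le> x \<and> x \<le> k then - \<rho> x else \<rho> x)"

definition psi_gen :: "int \<Rightarrow> int \<Rightarrow> int \<Rightarrow> op" where
  "psi_gen a b k = (\<lambda>\<tau> \<rho>. if \<rho> \<in> Conf a b \<and> \<tau> = flip a k \<rho>
      then (- of_int (\<rho> k) + \<i> * of_int (\<rho> (k + 1))) / complex_of_real (sqrt 2) else 0)"

definition psis_gen :: "int \<Rightarrow> int \<Rightarrow> int \<Rightarrow> op" where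
  "psis_gen a b k = (\<lambda>\<tau> \<rho>. if \<rho> \<in> Conf a b \<and> \<tau> = flip a k \<rho>
      then (- \<i> * of_int (\<rho> k) + of_int (\<rho> (k + 1))) / complex_of_real (sqrt 2) else 0)"

definition CliffGen :: "int \<Rightarrow> int \<Rightarrow> op set" where
  "CliffGen a b = {A. \<exists>\<alpha> \<beta> :: int \<Rightarrow> complex.
      A = (\<lambda>\<tau> \<rho>. \<Sum>k\<in>{a..<b}. \<alpha> k * psi_gen a b k \<tau> \<rho> + \<beta> k * psis_gen a b k \<tau> \<rho>)}"

definition beta_c :: real where "beta_c = ln (sqrt 2 + 1) / 2"

definition Th_half :: "int \<Rightarrow> int \<Rightarrow> op" where
  "Th_half a b = (\<lambda>\<tau> \<rho>. if \<tau> = \<rho> \<and> \<rho> \<in> Conf a b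
      then complex_of_real (exp (beta_c / 2 * (\<Sum>x\<in>{a..<b}. of_int (\<rho> x * \<rho> (x + 1))))) else 0)"

definition Tv :: "int \<Rightarrow> int \<Rightarrow> op" where
  "Tv a b = (\<lambda>\<tau> \<rho>. if \<tau> \<in> Conf a b \<and> \<rho> \<in> Conf a b \<and> \<tau> a = \<rho> a \<and> \<tau> b = \<rho> b
      then complex_of_real (exp (beta_c * (\<Sum>x\<in>{a..b}. of_int (\<rho> x * \<tau> x)))) else 0)"

definition Tmat :: "int \<Rightarrow> int \<Rightarrow> op" where
  "Tmat a b = op_mult a b (op_mult a b (Th_half a b) (Tv a b)) (Th_half a b)"

definition vertex :: "int \<Rightarrow> int \<Rightarrow> complex \<Rightarrow> bool" where
  "vertex a b v \<longleftrightarrow> (\<exists>x y::int. a \<le> x \<and> x \<le> b \<and> v = Complex (of_int x) (of_int y))"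

definition hedge :: "int \<Rightarrow> int \<Rightarrow> complex \<Rightarrow> bool" where
  "hedge a b z \<longleftrightarrow> (\<exists>k y::int. a \<le> k \<and> k < b \<and> z = Complex (of_int k + 1/2) (of_int y))"

definition vedge :: "int \<Rightarrow> int \<Rightarrow> complex \<Rightarrow> bool" where
  "vedge a b z \<longleftrightarrow> (\<exists>x y::int. a \<le> x \<and> x \<le> b \<and> z = Complex (of_int x) (of_int y + 1/2))"

definition edge :: "int \<Rightarrow> int \<Rightarrow> complex \<Rightarrow> bool" where
  "edge a b z \<longleftrightarrow> hedge a b z \<or> vedge a b z"

definition face :: "int \<Rightarrow> int \<Rightarrow> complex \<Rightarrow> bool" where
  "face a b p \<longleftrightarrow> (\<exists>k y::int. a \<le> k \<and> k < b \<and> p = Complex (of_int k + 1/2) (of_int y + 1/2))"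

text \<open>Edges z1, z2 both adjacent to a common vertex v and a common face p
  (an edge is adjacent to a vertex / face iff its midpoint is at distance 1/2).\<close>
definition corner_pair :: "int \<Rightarrow> int \<Rightarrow> complex \<Rightarrow> complex \<Rightarrow> complex \<Rightarrow> complex \<Rightarrow> bool" where
  "corner_pair a b z1 z2 v p \<longleftrightarrow> edge a b z1 \<and> edge a b z2 \<and> vertex a b v \<and> face a b p
     \<and> cmod (z1 - v) = 1/2 \<and> cmod (z2 - v) = 1/2 \<and> cmod (z1 - p) = 1/2 \<and> cmod (z2 - p) = 1/2"

definition fermion_conds :: "int \<Rightarrow> int \<Rightarrow> (complex \<Rightarrow> op) \<Rightarrow> (complex \<Rightarrow> op) \<Rightarrow> bool" where
  "fermion_conds a b \<psi> \<psi>s \<longleftrightarrow>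
     (\<forall>z. \<not> edge a b z \<longrightarrow> \<psi> z = op_zero \<and> \<psi>s z = op_zero)
   \<and> (\<forall>z. edge a b z \<longrightarrow> \<psi> z \<in> CliffGen a b \<and> \<psi>s z \<in> CliffGen a b)
   \<and> (\<forall>k y::int. a \<le> k \<and> k < b \<longrightarrow>
        \<psi> (Complex (of_int k + 1/2) (of_int y)) =
          op_mult a b (op_zpow a b (Tmat a b) (- y)) (op_mult a b (psi_gen a b k) (op_zpow a b (Tmat a b) y))
      \<and> \<psi>s (Complex (of_int k + 1/2) (of_int y)) =
          op_mult a b (op_zpow a b (Tmat a b) (- y)) (op_mult a b (psis_gen a b k) (op_zpow a b (Tmat a b) y)))
   \<and> (\<forall>z1 z2 v p. corner_pair a b z1 z2 v p \<longrightarrow>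
        op_add (\<psi> z1) (op_scale (\<i> * of_real (cmod (v - p)) / (v - p)) (\<psi>s z1)) =
        op_add (\<psi> z2) (op_scale (\<i> * of_real (cmod (v - p)) / (v - p)) (\<psi>s z2)))
   \<and> (\<forall>y::int. op_add (\<psi> (Complex (of_int a) (of_int y + 1/2)))
                      (op_scale \<i> (\<psi>s (Complex (of_int a) (of_int y + 1/2)))) = op_zero)
   \<and> (\<forall>y::int. op_add (\<psi> (Complex (of_int b) (of_int y + 1/2)))
                      (op_scale (- \<i>) (\<psi>s (Complex (of_int b) (of_int y + 1/2)))) = op_zero)"

text \<open>The fermions (\<psi>, \<psi>*) : E \<rightarrow> CliffGen, extended by 0 off E so that they are unique as HOL functions.\<close>
definition fermions :: "int \<Rightarrow> int \<Rightarrow> (complex \<Rightarrow> op) \<times> (complex \<Rightarrow> op)" where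
  "fermions a b = (THE fg. fermion_conds a b (fst fg) (snd fg))"

definition ICSH :: "int \<Rightarrow> int \<Rightarrow> (complex \<Rightarrow> complex) \<Rightarrow> (complex \<Rightarrow> complex) \<Rightarrow> bool" where
  "ICSH a b m ms \<longleftrightarrow> (\<forall>z1 z2 v p. corner_pair a b z1 z2 v p \<longrightarrow>
      m z1 - \<i> * of_real (cmod (v - p)) / (v - p) * ms z1 =
      m z2 - \<i> * of_real (cmod (v - p)) / (v - p) * ms z2)"

text \<open>Counterclockwise plaquette contour around face centre p, starting at corner number r:
  w_j = p - (1+i)/2 * i^(j+r), j = 0..4 (w_4 = w_0); z_j is the midpoint of w_{j-1}, w_j.\<close>
definition plaq_w :: "complex \<Rightarrow> nat \<Rightarrow> nat \<Rightarrow> complex" where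
  "plaq_w p r j = p - (1 + \<i>) / 2 * \<i> ^ (j + r)"

definition plaq_z :: "complex \<Rightarrow> nat \<Rightarrow> nat \<Rightarrow> complex" where
  "plaq_z p r j = (plaq_w p r (j - 1) + plaq_w p r j) / 2"

definition plaquette_integral ::
  "(complex \<Rightarrow> complex) \<Rightarrow> (complex \<Rightarrow> complex) \<Rightarrow> (complex \<Rightarrow> op) \<Rightarrow> (complex \<Rightarrow> op) \<Rightarrow> complex \<Rightarrow> nat \<Rightarrow> op" where
  "plaquette_integral m ms \<psi> \<psi>s p r = (\<lambda>\<tau> \<rho>. \<Sum>j\<in>{1..4::nat}.
      m (plaq_z p r j) * \<psi> (plaq_z p r j) \<tau> \<rho> * (plaq_w p r j - plaq_w p r (j - 1))
    + ms (plaq_z p r j) * \<psi>s (plaq_z p r j) \<tau> \<rho> * cnj (plaq_w p r j - plaq_w p r (j - 1)))"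

definition closed_form :: "int \<Rightarrow> int \<Rightarrow> (complex \<Rightarrow> complex) \<Rightarrow> (complex \<Rightarrow> complex) \<Rightarrow> (complex \<Rightarrow> op) \<Rightarrow> (complex \<Rightarrow> op) \<Rightarrow> bool" where
  "closed_form a b m ms \<psi> \<psi>s \<longleftrightarrow>
     (\<forall>p r. face a b p \<and> r < 4 \<longrightarrow> plaquette_integral m ms \<psi> \<psi>s p r = op_zero)"

end

theory Submission
  imports Defs
begin

text \<open>The fermions are constructed explicitly. Conjugation by \<open>T = T\<^sub>h\<^sup>1\<^sup>/\<^sup>2 T\<^sub>v T\<^sub>h\<^sup>1\<^sup>/\<^sup>2\<close> preserves the
  span of the operators \<open>e\<^sub>\<rho> \<mapsto> \<rho>\<^sub>k e\<^bsub>\<sigma>\<^sub>k\<rho>\<^esub>\<close> and \<open>e\<^sub>\<rho> \<mapsto> \<rho>\<^sub>k\<^sub>+\<^sub>1 e\<^bsub>\<sigma>\<^sub>k\<rho>\<^esub>\<close>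
  (\<open>\<sigma>\<^sub>k\<close> flipping the spins left of \<open>k + 1/2\<close>), and acts on the coefficients by an explicit
  linear map, so the fermions on horizontal edges are explicit. On a vertical edge the two corner
  relations with the bottom and top edge of an adjacent face determine the fermion, because
  the two corners carry different values of \<open>i|v - p|/(v - p)\<close>; at \<open>\<beta>\<^sub>c\<close> the resulting
  values also satisfy the other corner relations and the boundary conditions. This gives
  existence and uniqueness. Closedness is local: on a plaquette the four corner relations of
  \<open>(\<psi>, \<psi>\<^sup>*)\<close> and the four ICSH relations of \<open>(m, m\<^sup>*)\<close> eliminate the vertical values, and
  the contour sum cancels identically.\<close>

section \<open>Spin configurations and operators\<close>

lemma sum_eq_sum_plus_diff:
  fixes f g :: "'c \<Rightarrow> 'd::ab_group_add"
  assumes "finite S" "k \<in> S" "\<And>x. x \<in> S \<Longrightarrow> x \<noteq> k \<Longrightarrow> g x = f x"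
  shows "sum g S = sum f S + (g k - f k)"
proof -
  have "sum g (S - {k}) = sum f (S - {k})" using assms by (intro sum.cong) auto
  then show ?thesis using assms by (simp add: sum.remove algebra_simps)
qed

lemma Conf_values: "\<rho> \<in> Conf a b \<Longrightarrow> \<rho> x = 1 \<or> \<rho> x = -1"
  unfolding Conf_def by (cases "a \<le> x \<and> x \<le> b") auto

lemma Conf_eqI: "\<tau> \<in> Conf a b \<Longrightarrow> \<rho> \<in> Conf a b \<Longrightarrow> (\<And>x. a \<le> x \<Longrightarrow> x \<le> b \<Longrightarrow> \<tau> x = \<rho> x) \<Longrightarrow> \<tau> = \<rho>"
proof
  fix x assume "\<tau> \<in> Conf a b" "\<rho> \<in> Conf a b" "\<And>x. a \<le> x \<Longrightarrow> x \<le> b \<Longrightarrow> \<tau> x = \<rho> x"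
  then show "\<tau> x = \<rho> x" unfolding Conf_def by (cases "a \<le> x \<and> x \<le> b") auto
qed

lemma flip_flip [simp]: "flip a k (flip a k \<rho>) = \<rho>"
  unfolding flip_def by auto

lemma flip_apply_inside: "a \<le> x \<Longrightarrow> x \<le> k \<Longrightarrow> flip a k \<rho> x = - \<rho> x"
  and flip_apply_outside: "k < x \<Longrightarrow> flip a k \<rho> x = \<rho> x"
  by (simp_all add: flip_def)

lemma flip_in_Conf_iff [simp]: "k \<le> b \<Longrightarrow> flip a k \<rho> \<in> Conf a b \<longleftrightarrow> \<rho> \<in> Conf a b"
  unfolding flip_def Conf_def by (auto simp: minus_equation_iff[of "\<rho> _"])

lemma flip_eq_iff_flip: "k \<le> b \<Longrightarrow> (\<tau> \<in> Conf a b \<and> \<rho> = flip a k \<tau>) \<longleftrightarrow> (\<rho> \<in> Conf a b \<and> \<tau> = flip a k \<rho>)"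
  by (metis flip_flip flip_in_Conf_iff)

definition Conf_on :: "int set \<Rightarrow> spin set" where
  "Conf_on S = {\<rho>. (\<forall>x\<in>S. \<rho> x = 1 \<or> \<rho> x = -1) \<and> (\<forall>x. x \<notin> S \<longrightarrow> \<rho> x = 1)}"

lemma Conf_eq_Conf_on: "Conf a b = Conf_on {a..b}"
  unfolding Conf_def Conf_on_def by auto

lemma Conf_on_empty: "Conf_on {} = {\<lambda>_. 1}"
  unfolding Conf_on_def by auto

lemma Conf_on_insert:
  assumes "x \<notin> S"
  shows "Conf_on (insert x S) = (\<lambda>(\<sigma>, s). \<sigma>(x := s)) ` (Conf_on S \<times> {1, -1})"
proof
  show "Conf_on (insert x S) \<subseteq> (\<lambda>(\<sigma>, s). \<sigma>(x := s)) ` (Conf_on S \<times> {1, -1})"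
  proof
    fix \<rho> assume "\<rho> \<in> Conf_on (insert x S)"
    then have "(\<rho>(x := 1), \<rho> x) \<in> Conf_on S \<times> {1, -1}"
      using assms unfolding Conf_on_def by auto
    then show "\<rho> \<in> (\<lambda>(\<sigma>, s). \<sigma>(x := s)) ` (Conf_on S \<times> {1, -1})"
      by (rule rev_image_eqI) simp
  qed
  show "(\<lambda>(\<sigma>, s). \<sigma>(x := s)) ` (Conf_on S \<times> {1, -1}) \<subseteq> Conf_on (insert x S)"
    unfolding Conf_on_def by force
qed

lemma inj_on_Conf_on_insert:
  assumes "x \<notin> S"
  shows "inj_on (\<lambda>(\<sigma>, s). \<sigma>(x := s)) (Conf_on S \<times> {1, -1})"
proof (rule inj_onI, clarify)
  fix \<sigma> s \<sigma>' s'
  assume "\<sigma> \<in> Conf_on S" "\<sigma>' \<in> Conf_on S" and eq: "\<sigma>(x := s) = \<sigma>'(x := s')"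
  then have "\<sigma> x = \<sigma>' x" using assms unfolding Conf_on_def by auto
  with eq show "\<sigma> = \<sigma>' \<and> s = s'" by (metis fun_upd_idem fun_upd_upd fun_upd_same)
qed

lemma finite_Conf_on: "finite S \<Longrightarrow> finite (Conf_on S)"
  by (induction S rule: finite_induct) (simp_all add: Conf_on_empty Conf_on_insert)

lemma finite_Conf [simp]: "finite (Conf a b)"
  by (simp add: Conf_eq_Conf_on finite_Conf_on)

lemma sum_Conf_on_prod:
  fixes g :: "int \<Rightarrow> int \<Rightarrow> 'c::comm_semiring_1"
  assumes "finite S"
  shows "(\<Sum>\<sigma>\<in>Conf_on S. \<Prod>x\<in>S. g x (\<sigma> x)) = (\<Prod>x\<in>S. g x 1 + g x (-1))"
  using assms
proof (induction S rule: finite_induct)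
  case empty
  then show ?case by (simp add: Conf_on_empty)
next
  case (insert x S)
  have prod_upd: "(\<Prod>y\<in>insert x S. g y ((\<sigma>(x := s)) y)) = g x s * (\<Prod>y\<in>S. g y (\<sigma> y))" for \<sigma> s
  proof -
    have "(\<Prod>y\<in>S. g y ((\<sigma>(x := s)) y)) = (\<Prod>y\<in>S. g y (\<sigma> y))"
      using insert.hyps by (intro prod.cong) auto
    then show ?thesis using insert.hyps by simp
  qed
  have "(\<Sum>\<sigma>\<in>Conf_on (insert x S). \<Prod>y\<in>insert x S. g y (\<sigma> y))
      = (\<Sum>(\<sigma>, s)\<in>Conf_on S \<times> {1, -1}. g x s * (\<Prod>y\<in>S. g y (\<sigma> y)))"
    unfolding Conf_on_insert[OF insert.hyps(2)] sum.reindex[OF inj_on_Conf_on_insert[OF insert.hyps(2)]]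
    by (simp add: comp_def case_prod_beta prod_upd del: fun_upd_apply)
  also have "\<dots> = (\<Sum>\<sigma>\<in>Conf_on S. (g x 1 + g x (-1)) * (\<Prod>y\<in>S. g y (\<sigma> y)))"
    by (simp add: sum.cartesian_product[symmetric] distrib_right)
  also have "\<dots> = (\<Prod>y\<in>insert x S. g y 1 + g y (-1))"
    using insert by (simp add: sum_distrib_left[symmetric])
  finally show ?case .
qed

lemma sum_Conf_prod:
  fixes g :: "int \<Rightarrow> int \<Rightarrow> 'c::comm_semiring_1"
  shows "(\<Sum>\<sigma>\<in>Conf a b. \<Prod>x\<in>{a..b}. g x (\<sigma> x)) = (\<Prod>x\<in>{a..b}. g x 1 + g x (-1))"
  unfolding Conf_eq_Conf_on by (rule sum_Conf_on_prod) simp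

lemma op_mult_assoc: "op_mult a b (op_mult a b X Y) Z = op_mult a b X (op_mult a b Y Z)"
  unfolding op_mult_def
  by (auto simp: fun_eq_iff sum_distrib_left sum_distrib_right mult.assoc intro: sum.swap)

lemma is_op_op_mult: "is_op a b X \<Longrightarrow> is_op a b Y \<Longrightarrow> is_op a b (op_mult a b X Y)"
  unfolding is_op_def op_mult_def by auto

lemma is_op_op_id: "is_op a b (op_id a b)"
  unfolding is_op_def op_id_def by auto

lemma op_mult_id_left:
  assumes "is_op a b X"
  shows "op_mult a b (op_id a b) X = X"
proof (intro ext)
  fix \<tau> \<rho>
  have "op_mult a b (op_id a b) X \<tau> \<rho> = (\<Sum>\<sigma>\<in>Conf a b. if \<sigma> = \<tau> then X \<sigma> \<rho> else 0)"
    unfolding op_mult_def op_id_def by (rule sum.cong) auto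
  then show "op_mult a b (op_id a b) X \<tau> \<rho> = X \<tau> \<rho>"
    using assms unfolding is_op_def by (auto simp: sum.delta)
qed

lemma op_mult_id_right:
  assumes "is_op a b X"
  shows "op_mult a b X (op_id a b) = X"
proof (intro ext)
  fix \<tau> \<rho>
  have "op_mult a b X (op_id a b) \<tau> \<rho> = (\<Sum>\<sigma>\<in>Conf a b. if \<sigma> = \<rho> then X \<tau> \<sigma> else 0)"
    unfolding op_mult_def op_id_def by (rule sum.cong) auto
  then show "op_mult a b X (op_id a b) \<tau> \<rho> = X \<tau> \<rho>"
    using assms unfolding is_op_def by (auto simp: sum.delta')
qed

lemma op_mult_op_add_left: "op_mult a b (op_add X Y) M = op_add (op_mult a b X M) (op_mult a b Y M)"
  unfolding op_mult_def op_add_def by (simp add: distrib_right sum.distrib)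

lemma op_mult_op_add_right: "op_mult a b M (op_add X Y) = op_add (op_mult a b M X) (op_mult a b M Y)"
  unfolding op_mult_def op_add_def by (simp add: distrib_left sum.distrib)

lemma op_mult_op_scale_left: "op_mult a b (op_scale c X) M = op_scale c (op_mult a b X M)"
  unfolding op_mult_def op_scale_def by (simp add: sum_distrib_left mult.assoc)

lemma op_mult_op_scale_right: "op_mult a b M (op_scale c X) = op_scale c (op_mult a b M X)"
  unfolding op_mult_def op_scale_def by (simp add: sum_distrib_left mult.left_commute)

definition op_transpose :: "op \<Rightarrow> op" where
  "op_transpose X = (\<lambda>\<tau> \<rho>. X \<rho> \<tau>)"

lemma op_transpose_transpose [simp]: "op_transpose (op_transpose X) = X"
  unfolding op_transpose_def by simp

lemma op_transpose_mult: "op_transpose (op_mult a b X Y) = op_mult a b (op_transpose Y) (op_transpose X)"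
  unfolding op_transpose_def op_mult_def by (simp add: mult.commute)

definition op_inverse :: "int \<Rightarrow> int \<Rightarrow> op \<Rightarrow> op \<Rightarrow> bool" where
  "op_inverse a b X Y \<longleftrightarrow>
     is_op a b X \<and> is_op a b Y \<and> op_mult a b X Y = op_id a b \<and> op_mult a b Y X = op_id a b"

lemma op_inverse_mult:
  assumes "op_inverse a b X X'" and "op_inverse a b Y Y'"
  shows "op_inverse a b (op_mult a b X Y) (op_mult a b Y' X')"
proof -
  have "op_mult a b (op_mult a b X Y) (op_mult a b Y' X') = op_mult a b X (op_mult a b (op_mult a b Y Y') X')"
    "op_mult a b (op_mult a b Y' X') (op_mult a b X Y) = op_mult a b Y' (op_mult a b (op_mult a b X' X) Y)"
    by (simp_all only: op_mult_assoc)
  then show ?thesis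
    using assms unfolding op_inverse_def by (simp add: is_op_op_mult op_mult_id_left)
qed

lemma op_inv_eqI:
  assumes "op_inverse a b X Y"
  shows "op_inv a b X = Y"
  unfolding op_inv_def
proof (rule the_equality)
  show "is_op a b Y \<and> op_mult a b X Y = op_id a b \<and> op_mult a b Y X = op_id a b"
    using assms unfolding op_inverse_def by simp
next
  fix B assume B: "is_op a b B \<and> op_mult a b X B = op_id a b \<and> op_mult a b B X = op_id a b"
  have "B = op_mult a b B (op_mult a b X Y)"
    using B assms unfolding op_inverse_def by (simp add: op_mult_id_right)
  also have "\<dots> = op_mult a b (op_mult a b B X) Y"
    by (simp only: op_mult_assoc)
  also have "\<dots> = Y"
    using B assms unfolding op_inverse_def by (simp add: op_mult_id_left)
  finally show "B = Y" .
qed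

lemma is_op_op_pow: "is_op a b X \<Longrightarrow> is_op a b (op_pow a b X n)"
  by (induction n) (simp_all add: is_op_op_id is_op_op_mult)

lemma op_pow_commute: "is_op a b X \<Longrightarrow> op_mult a b X (op_pow a b X n) = op_mult a b (op_pow a b X n) X"
proof (induction n)
  case 0
  then show ?case by (simp add: op_mult_id_left op_mult_id_right)
next
  case (Suc n)
  have "op_mult a b (op_mult a b X (op_pow a b X n)) X = op_mult a b X (op_mult a b (op_pow a b X n) X)"
    by (simp only: op_mult_assoc)
  also have "\<dots> = op_mult a b X (op_mult a b X (op_pow a b X n))"
    using Suc by simp
  finally show ?case by simp
qed

lemma op_zpow_0 [simp]: "op_zpow a b X 0 = op_id a b"
  unfolding op_zpow_def by simp

context
  fixes a b :: int and X Xi :: op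
  assumes inverse: "op_inverse a b X Xi"
begin

lemma op_zpow_nonneg: "op_zpow a b X (int n) = op_pow a b X n"
  unfolding op_zpow_def by simp

lemma op_zpow_neg: "op_zpow a b X (- int n) = op_pow a b Xi n"
  unfolding op_zpow_def op_inv_eqI[OF inverse] by (cases n) (simp_all add: nat_add_distrib)

lemma is_op_op_zpow: "is_op a b (op_zpow a b X z)"
  using inverse unfolding op_zpow_def op_inv_eqI[OF inverse] op_inverse_def by (simp add: is_op_op_pow)

lemma op_zpow_add1:
  "op_zpow a b X (z + 1) = op_mult a b X (op_zpow a b X z)"
  "op_zpow a b X (z + 1) = op_mult a b (op_zpow a b X z) X"
proof -
  have X: "is_op a b X" "is_op a b Xi" "op_mult a b X Xi = op_id a b" "op_mult a b Xi X = op_id a b"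
    using inverse unfolding op_inverse_def by auto
  have "op_zpow a b X (z + 1) = op_mult a b X (op_zpow a b X z)
      \<and> op_zpow a b X (z + 1) = op_mult a b (op_zpow a b X z) X"
  proof (cases z rule: int_cases)
    case (nonneg n)
    then have "z + 1 = int (Suc n)" by simp
    then show ?thesis unfolding nonneg using X by (simp only: op_zpow_nonneg) (simp add: op_pow_commute)
  next
    case (neg n)
    then have z: "z + 1 = - int n" "z = - int (Suc n)" by simp_all
    let ?P = "op_pow a b Xi n"
    have P: "is_op a b ?P" using X by (simp add: is_op_op_pow)
    have "op_mult a b X (op_mult a b Xi ?P) = ?P"
      using X P by (simp add: op_mult_assoc[symmetric] op_mult_id_left)
    moreover have "op_mult a b (op_mult a b Xi ?P) X = ?P"
      using X P by (simp add: op_pow_commute op_mult_assoc op_mult_id_right)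
    ultimately show ?thesis unfolding z(1) unfolding z(2) op_zpow_neg by simp
  qed
  then show "op_zpow a b X (z + 1) = op_mult a b X (op_zpow a b X z)"
    "op_zpow a b X (z + 1) = op_mult a b (op_zpow a b X z) X" by auto
qed

lemma op_zpow_diff1:
  "op_zpow a b X (z - 1) = op_mult a b Xi (op_zpow a b X z)"
  "op_zpow a b X (z - 1) = op_mult a b (op_zpow a b X z) Xi"
proof -
  have X: "op_mult a b X Xi = op_id a b" "op_mult a b Xi X = op_id a b"
    using inverse unfolding op_inverse_def by auto
  have P: "is_op a b (op_zpow a b X (z - 1))" by (rule is_op_op_zpow)
  have e1: "op_zpow a b X z = op_mult a b X (op_zpow a b X (z - 1))"
    and e2: "op_zpow a b X z = op_mult a b (op_zpow a b X (z - 1)) X"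
    using op_zpow_add1[of "z - 1"] by simp_all
  show "op_zpow a b X (z - 1) = op_mult a b Xi (op_zpow a b X z)"
    unfolding e1 using X P by (simp add: op_mult_assoc[symmetric] op_mult_id_left)
  show "op_zpow a b X (z - 1) = op_mult a b (op_zpow a b X z) Xi"
    unfolding e2 using X P by (simp add: op_mult_assoc op_mult_id_right)
qed

lemma op_zpow_1: "op_zpow a b X 1 = X"
  using op_zpow_add1(1)[of 0] inverse by (simp add: op_mult_id_right op_inverse_def)

lemma op_zpow_minus1: "op_zpow a b X (-1) = Xi"
  using op_zpow_diff1(1)[of 0] inverse by (simp add: op_mult_id_right op_inverse_def)

end

definition op_conj :: "int \<Rightarrow> int \<Rightarrow> op \<Rightarrow> int \<Rightarrow> op \<Rightarrow> op" where
  "op_conj a b X y A = op_mult a b (op_zpow a b X (- y)) (op_mult a b A (op_zpow a b X y))"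

lemma op_conj_op_add: "op_conj a b X y (op_add A B) = op_add (op_conj a b X y A) (op_conj a b X y B)"
  unfolding op_conj_def op_mult_op_add_left op_mult_op_add_right ..

lemma op_conj_op_zero: "op_conj a b X y op_zero = op_zero"
  unfolding op_conj_def op_mult_def op_zero_def by simp

lemma op_conj_op_scale: "op_conj a b X y (op_scale c A) = op_scale c (op_conj a b X y A)"
  unfolding op_conj_def op_mult_op_scale_left op_mult_op_scale_right ..

context
  fixes a b :: int and X Xi :: op
  assumes inverse: "op_inverse a b X Xi"
begin

lemma op_conj_0: "is_op a b A \<Longrightarrow> op_conj a b X 0 A = A"
  unfolding op_conj_def by (simp add: op_mult_id_left op_mult_id_right)

lemma op_conj_1: "op_conj a b X 1 A = op_mult a b Xi (op_mult a b A X)"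
  unfolding op_conj_def op_zpow_1[OF inverse] op_zpow_minus1[OF inverse] ..

lemma op_conj_minus1: "op_conj a b X (-1) A = op_mult a b X (op_mult a b A Xi)"
  unfolding op_conj_def minus_minus op_zpow_1[OF inverse] op_zpow_minus1[OF inverse] ..

lemma op_conj_add1: "op_conj a b X (y + 1) A = op_conj a b X y (op_conj a b X 1 A)"
proof -
  have "op_zpow a b X (- (y + 1)) = op_mult a b (op_zpow a b X (- y)) Xi"
    using op_zpow_diff1(2)[OF inverse, of "- y"] by simp
  then show ?thesis
    unfolding op_conj_def op_zpow_add1(1)[OF inverse]
    by (simp only: op_mult_assoc op_zpow_1[OF inverse] op_zpow_minus1[OF inverse])
qed

lemma op_conj_diff1: "op_conj a b X (y - 1) A = op_conj a b X y (op_conj a b X (-1) A)"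
proof -
  have "op_zpow a b X (- (y - 1)) = op_mult a b (op_zpow a b X (- y)) X"
    using op_zpow_add1(2)[OF inverse, of "- y"] by simp
  then show ?thesis
    unfolding op_conj_def op_zpow_diff1(1)[OF inverse]
    by (simp only: op_mult_assoc minus_minus op_zpow_1[OF inverse] op_zpow_minus1[OF inverse])
qed

end

section \<open>The transfer matrix and its inverse\<close>

lemma exp_2beta_c: "exp (2 * beta_c) = sqrt 2 + 1"
proof -
  have "(0::real) < sqrt 2 + 1" by (simp add: add_pos_nonneg)
  then show ?thesis unfolding beta_c_def by simp
qed

lemma exp_minus_2beta_c: "exp (- (2 * beta_c)) = sqrt 2 - 1"
proof -
  have "(sqrt 2 - 1) * (sqrt 2 + 1) = (1::real)" by (simp add: algebra_simps)
  then have "inverse (sqrt 2 + 1) = sqrt 2 - 1" by (simp add: inverse_unique mult.commute)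
  then show ?thesis by (simp only: exp_minus exp_2beta_c)
qed

lemma exp_beta_c_squared: "exp beta_c * exp beta_c = sqrt 2 + 1"
  using exp_2beta_c by (simp only: mult_2 exp_add)

lemma exp_minus_beta_c_squared: "exp (- beta_c) * exp (- beta_c) = sqrt 2 - 1"
  using exp_minus_2beta_c by (simp only: mult_2 minus_add_distrib exp_add)

lemma exp_beta_c_mult_exp_minus: "exp beta_c * exp (- beta_c) = 1"
  by (simp flip: exp_add)

lemma cosh_beta_c_squared: "cosh beta_c * cosh beta_c = (sqrt 2 + 1) / 2"
  and sinh_beta_c_squared: "sinh beta_c * sinh beta_c = (sqrt 2 - 1) / 2"
  and cosh_sinh_beta_c: "cosh beta_c * sinh beta_c = 1 / 2"
  unfolding cosh_def sinh_def
  using exp_beta_c_squared exp_minus_beta_c_squared exp_beta_c_mult_exp_minus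
  by (simp_all add: field_simps algebra_simps del: exp_minus)

lemma sign_mult_exp_beta_c:
  assumes "s = 1 \<or> s = -1" and "t = 1 \<or> t = -1"
  shows "of_int s * exp (beta_c * of_int (s * t)) = cosh beta_c * of_int s + sinh beta_c * of_int t"
  using assms unfolding cosh_def sinh_def by (elim disjE) (simp_all add: field_simps)

definition Th_half_entry :: "int \<Rightarrow> int \<Rightarrow> spin \<Rightarrow> complex" where
  "Th_half_entry a b \<rho> = complex_of_real (exp (beta_c / 2 * (\<Sum>x\<in>{a..<b}. of_int (\<rho> x * \<rho> (x + 1)))))"

lemma Th_half_mult_left:
  "op_mult a b (Th_half a b) X \<tau> \<rho> = (if \<tau> \<in> Conf a b then Th_half_entry a b \<tau> * X \<tau> \<rho> else 0)"
proof -
  have "op_mult a b (Th_half a b) X \<tau> \<rho>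
      = (\<Sum>\<sigma>\<in>Conf a b. if \<sigma> = \<tau> then (if \<tau> \<in> Conf a b then Th_half_entry a b \<tau> * X \<tau> \<rho> else 0) else 0)"
    unfolding op_mult_def Th_half_def Th_half_entry_def by (rule sum.cong) auto
  then show ?thesis by (simp add: sum.delta)
qed

lemma Th_half_mult_right:
  "op_mult a b X (Th_half a b) \<tau> \<rho> = (if \<rho> \<in> Conf a b then X \<tau> \<rho> * Th_half_entry a b \<rho> else 0)"
proof -
  have "op_mult a b X (Th_half a b) \<tau> \<rho>
      = (\<Sum>\<sigma>\<in>Conf a b. if \<sigma> = \<rho> then (if \<rho> \<in> Conf a b then X \<tau> \<rho> * Th_half_entry a b \<rho> else 0) else 0)"
    unfolding op_mult_def Th_half_def Th_half_entry_def by (rule sum.cong) auto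
  then show ?thesis by (simp add: sum.delta)
qed

definition Th_half_inv :: "int \<Rightarrow> int \<Rightarrow> op" where
  "Th_half_inv a b = (\<lambda>\<tau> \<rho>. if \<tau> = \<rho> \<and> \<rho> \<in> Conf a b then 1 / Th_half_entry a b \<rho> else 0)"

lemma Th_half_entry_nonzero: "Th_half_entry a b \<rho> \<noteq> 0"
  unfolding Th_half_entry_def by simp

lemma op_inverse_Th_half: "op_inverse a b (Th_half a b) (Th_half_inv a b)"
proof -
  have "op_mult a b (Th_half a b) (Th_half_inv a b) = op_id a b"
    "op_mult a b (Th_half_inv a b) (Th_half a b) = op_id a b"
    by (intro ext; simp add: Th_half_mult_left Th_half_mult_right Th_half_inv_def op_id_def
        Th_half_entry_nonzero)+
  moreover have "is_op a b (Th_half a b)" "is_op a b (Th_half_inv a b)"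
    unfolding is_op_def Th_half_def Th_half_inv_def by auto
  ultimately show ?thesis unfolding op_inverse_def by simp
qed

lemma op_mult_eq_id_if_site_inverse:
  fixes f g :: "int \<Rightarrow> int \<Rightarrow> int \<Rightarrow> complex"
  assumes "is_op a b X" and "is_op a b Y"
    and X: "\<And>\<tau> \<sigma>. \<tau> \<in> Conf a b \<Longrightarrow> \<sigma> \<in> Conf a b \<Longrightarrow> X \<tau> \<sigma> = (\<Prod>x\<in>{a..b}. f x (\<tau> x) (\<sigma> x))"
    and Y: "\<And>\<sigma> \<rho>. \<sigma> \<in> Conf a b \<Longrightarrow> \<rho> \<in> Conf a b \<Longrightarrow> Y \<sigma> \<rho> = (\<Prod>x\<in>{a..b}. g x (\<sigma> x) (\<rho> x))"
    and site: "\<And>x t r. t = 1 \<or> t = -1 \<Longrightarrow> r = 1 \<or> r = -1 \<Longrightarrow>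
        f x t 1 * g x 1 r + f x t (-1) * g x (-1) r = (if t = r then 1 else 0)"
  shows "op_mult a b X Y = op_id a b"
proof (intro ext)
  fix \<tau> \<rho>
  show "op_mult a b X Y \<tau> \<rho> = op_id a b \<tau> \<rho>"
  proof (cases "\<tau> \<in> Conf a b \<and> \<rho> \<in> Conf a b")
    case True
    have "op_mult a b X Y \<tau> \<rho> = (\<Sum>\<sigma>\<in>Conf a b. \<Prod>x\<in>{a..b}. f x (\<tau> x) (\<sigma> x) * g x (\<sigma> x) (\<rho> x))"
      unfolding op_mult_def using True by (intro sum.cong) (auto simp: X Y prod.distrib)
    also have "\<dots> = (\<Prod>x\<in>{a..b}. f x (\<tau> x) 1 * g x 1 (\<rho> x) + f x (\<tau> x) (-1) * g x (-1) (\<rho> x))"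
      by (rule sum_Conf_prod)
    also have "\<dots> = (\<Prod>x\<in>{a..b}. if \<tau> x = \<rho> x then 1 else 0)"
      using True by (intro prod.cong refl site) (auto dest: Conf_values)
    also have "\<dots> = op_id a b \<tau> \<rho>"
      using True Conf_eqI[of \<tau> a b \<rho>] unfolding op_id_def by (auto simp: prod_zero_iff)
    finally show ?thesis .
  next
    case False
    then show ?thesis using assms(1,2) unfolding op_mult_def op_id_def is_op_def by auto
  qed
qed

definition Tv_site :: "int \<Rightarrow> int \<Rightarrow> int \<Rightarrow> int \<Rightarrow> int \<Rightarrow> complex" where
  "Tv_site a b x s s' = (if x = a \<or> x = b then (if s = s' then complex_of_real (exp beta_c) else 0)
      else complex_of_real (exp (beta_c * of_int (s' * s))))"

text \<open>At an inner site the factor of \<open>T\<^sub>v\<close> is the matrix \<open>(exp (\<beta>\<^sub>c s s'))\<^sub>s\<^sub>,\<^sub>s\<^sub>'\<close>, whose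
  determinant \<open>exp (2 \<beta>\<^sub>c) - exp (-2 \<beta>\<^sub>c)\<close> equals 2; at the two boundary sites it is diagonal.\<close>

definition Tv_site_inv :: "int \<Rightarrow> int \<Rightarrow> int \<Rightarrow> int \<Rightarrow> int \<Rightarrow> complex" where
  "Tv_site_inv a b x s s' = (if x = a \<or> x = b then (if s = s' then complex_of_real (exp (- beta_c)) else 0)
      else of_int (s * s') * complex_of_real (exp (beta_c * of_int (s * s'))) / 2)"

definition Tv_inv :: "int \<Rightarrow> int \<Rightarrow> op" where
  "Tv_inv a b = (\<lambda>\<tau> \<rho>. if \<tau> \<in> Conf a b \<and> \<rho> \<in> Conf a b then \<Prod>x\<in>{a..b}. Tv_site_inv a b x (\<tau> x) (\<rho> x) else 0)"

lemma Tv_eq_prod: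
  assumes "\<tau> \<in> Conf a b" and "\<sigma> \<in> Conf a b" and "a < b"
  shows "Tv a b \<tau> \<sigma> = (\<Prod>x\<in>{a..b}. Tv_site a b x (\<tau> x) (\<sigma> x))"
proof (cases "\<tau> a = \<sigma> a \<and> \<tau> b = \<sigma> b")
  case True
  have "Tv a b \<tau> \<sigma> = complex_of_real (\<Prod>x\<in>{a..b}. exp (beta_c * of_int (\<sigma> x * \<tau> x)))"
    unfolding Tv_def using assms True by (simp add: sum_distrib_left exp_sum)
  also have "\<dots> = (\<Prod>x\<in>{a..b}. Tv_site a b x (\<tau> x) (\<sigma> x))"
  proof (unfold of_real_prod, intro prod.cong refl)
    fix x assume "x \<in> {a..b}"
    have "real_of_int (\<sigma> x) * real_of_int (\<sigma> x) = 1" using Conf_values[OF assms(2), of x] by auto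
    then show "complex_of_real (exp (beta_c * of_int (\<sigma> x * \<tau> x))) = Tv_site a b x (\<tau> x) (\<sigma> x)"
      using True unfolding Tv_site_def by auto
  qed
  finally show ?thesis .
next
  case False
  then have "\<exists>x\<in>{a..b}. Tv_site a b x (\<tau> x) (\<sigma> x) = 0"
    using assms unfolding Tv_site_def by auto
  then show ?thesis unfolding Tv_def using False by (auto simp: prod_zero_iff)
qed

lemma Tv_site_inverse:
  assumes "t = 1 \<or> t = -1" and "r = 1 \<or> r = -1"
  shows "Tv_site a b x t 1 * Tv_site_inv a b x 1 r + Tv_site a b x t (-1) * Tv_site_inv a b x (-1) r
      = (if t = r then 1 else 0)"
    and "Tv_site_inv a b x t 1 * Tv_site a b x 1 r + Tv_site_inv a b x t (-1) * Tv_site a b x (-1) r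
      = (if t = r then 1 else 0)"
proof -
  have exps: "complex_of_real (exp beta_c) * complex_of_real (exp beta_c) = complex_of_real (sqrt 2) + 1"
    "complex_of_real (exp (- beta_c)) * complex_of_real (exp (- beta_c)) = complex_of_real (sqrt 2) - 1"
    "complex_of_real (exp beta_c) * complex_of_real (exp (- beta_c)) = 1"
    "complex_of_real (exp (- beta_c)) * complex_of_real (exp beta_c) = 1"
    using exp_beta_c_squared exp_minus_beta_c_squared exp_beta_c_mult_exp_minus
    by (simp_all flip: of_real_mult add: mult.commute)
  show "Tv_site a b x t 1 * Tv_site_inv a b x 1 r + Tv_site a b x t (-1) * Tv_site_inv a b x (-1) r
      = (if t = r then 1 else 0)"
    using assms unfolding Tv_site_def Tv_site_inv_def by (elim disjE) (auto simp: exps field_simps)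
  show "Tv_site_inv a b x t 1 * Tv_site a b x 1 r + Tv_site_inv a b x t (-1) * Tv_site a b x (-1) r
      = (if t = r then 1 else 0)"
    using assms unfolding Tv_site_def Tv_site_inv_def by (elim disjE) (auto simp: exps field_simps)
qed

lemma op_inverse_Tv:
  assumes "a < b"
  shows "op_inverse a b (Tv a b) (Tv_inv a b)"
proof -
  have "is_op a b (Tv a b)" "is_op a b (Tv_inv a b)"
    unfolding is_op_def Tv_def Tv_inv_def by auto
  moreover have "op_mult a b (Tv a b) (Tv_inv a b) = op_id a b"
    "op_mult a b (Tv_inv a b) (Tv a b) = op_id a b"
    using calculation Tv_site_inverse
    by (auto intro!: op_mult_eq_id_if_site_inverse simp: Tv_eq_prod[OF _ _ assms] Tv_inv_def)
  ultimately show ?thesis unfolding op_inverse_def by simp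
qed

definition Tmat_inv :: "int \<Rightarrow> int \<Rightarrow> op" where
  "Tmat_inv a b = op_mult a b (Th_half_inv a b) (op_mult a b (Tv_inv a b) (Th_half_inv a b))"

lemma op_inverse_Tmat: "a < b \<Longrightarrow> op_inverse a b (Tmat a b) (Tmat_inv a b)"
  using op_inverse_mult[OF op_inverse_mult[OF op_inverse_Th_half op_inverse_Tv] op_inverse_Th_half]
  unfolding Tmat_def Tmat_inv_def by (simp add: op_mult_assoc)

lemma op_transpose_Th_half: "op_transpose (Th_half a b) = Th_half a b"
  unfolding op_transpose_def Th_half_def by (intro ext) auto

lemma op_transpose_Tv: "op_transpose (Tv a b) = Tv a b"
  unfolding op_transpose_def Tv_def by (intro ext) (auto simp: mult.commute)

lemma op_transpose_Tmat: "op_transpose (Tmat a b) = Tmat a b"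
  unfolding Tmat_def op_transpose_mult op_transpose_Th_half op_transpose_Tv by (simp add: op_mult_assoc)

section \<open>Conjugating flip operators by the transfer matrix\<close>

definition flip_op :: "int \<Rightarrow> int \<Rightarrow> int \<Rightarrow> (spin \<Rightarrow> complex) \<Rightarrow> op" where
  "flip_op a b k c = (\<lambda>\<tau> \<rho>. if \<rho> \<in> Conf a b \<and> \<tau> = flip a k \<rho> then c \<rho> else 0)"

definition flip_sgn_lo :: "int \<Rightarrow> int \<Rightarrow> int \<Rightarrow> op" where
  "flip_sgn_lo a b k = flip_op a b k (\<lambda>\<rho>. of_int (\<rho> k))"

definition flip_sgn_hi :: "int \<Rightarrow> int \<Rightarrow> int \<Rightarrow> op" where
  "flip_sgn_hi a b k = flip_op a b k (\<lambda>\<rho>. of_int (\<rho> (k + 1)))"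

definition flip_comb :: "int \<Rightarrow> int \<Rightarrow> (int \<Rightarrow> complex) \<Rightarrow> (int \<Rightarrow> complex) \<Rightarrow> op" where
  "flip_comb a b \<alpha> \<beta> = (\<lambda>\<tau> \<rho>. \<Sum>j\<in>{a..<b}. \<alpha> j * flip_sgn_lo a b j \<tau> \<rho> + \<beta> j * flip_sgn_hi a b j \<tau> \<rho>)"

lemma is_op_flip_comb: "is_op a b (flip_comb a b \<alpha> \<beta>)"
  unfolding is_op_def flip_comb_def flip_sgn_lo_def flip_sgn_hi_def flip_op_def
  by (auto intro!: sum.neutral)

lemma flip_op_mult_left:
  assumes "k \<le> b"
  shows "op_mult a b (flip_op a b k c) M \<tau> \<rho>
       = (if \<tau> \<in> Conf a b then c (flip a k \<tau>) * M (flip a k \<tau>) \<rho> else 0)"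
proof -
  have "op_mult a b (flip_op a b k c) M \<tau> \<rho>
      = (\<Sum>\<sigma>\<in>Conf a b. if \<sigma> = flip a k \<tau> then c \<sigma> * M \<sigma> \<rho> else 0)"
    unfolding op_mult_def flip_op_def by (rule sum.cong) auto
  then show ?thesis using assms by (simp add: sum.delta')
qed

lemma flip_op_mult_right:
  assumes "k \<le> b"
  shows "op_mult a b M (flip_op a b k c) \<tau> \<rho>
       = (if \<rho> \<in> Conf a b then M \<tau> (flip a k \<rho>) * c \<rho> else 0)"
proof -
  have "op_mult a b M (flip_op a b k c) \<tau> \<rho>
      = (\<Sum>\<sigma>\<in>Conf a b. if \<sigma> = flip a k \<rho> then (if \<rho> \<in> Conf a b then M \<tau> \<sigma> * c \<rho> else 0) else 0)"
    unfolding op_mult_def flip_op_def by (rule sum.cong) auto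
  then show ?thesis using assms by (auto simp add: sum.delta')
qed

lemma flip_comb_mult_left: "op_mult a b (flip_comb a b \<alpha> \<beta>) M \<tau> \<rho>
   = (\<Sum>j\<in>{a..<b}. \<alpha> j * op_mult a b (flip_sgn_lo a b j) M \<tau> \<rho> + \<beta> j * op_mult a b (flip_sgn_hi a b j) M \<tau> \<rho>)"
  unfolding op_mult_def flip_comb_def
  by (simp add: sum_distrib_left sum_distrib_right sum.distrib[symmetric] algebra_simps sum.swap[of _ "{a..<b}"])

lemma flip_comb_mult_right: "op_mult a b M (flip_comb a b \<alpha> \<beta>) \<tau> \<rho>
   = (\<Sum>j\<in>{a..<b}. \<alpha> j * op_mult a b M (flip_sgn_lo a b j) \<tau> \<rho> + \<beta> j * op_mult a b M (flip_sgn_hi a b j) \<tau> \<rho>)"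
  unfolding op_mult_def flip_comb_def
  by (simp add: sum_distrib_left sum_distrib_right sum.distrib[symmetric] algebra_simps sum.swap[of _ "{a..<b}"])

lemma flip_comb_cong:
  "(\<And>j. a \<le> j \<Longrightarrow> j < b \<Longrightarrow> \<alpha> j = \<alpha>' j) \<Longrightarrow> (\<And>j. a \<le> j \<Longrightarrow> j < b \<Longrightarrow> \<beta> j = \<beta>' j)
    \<Longrightarrow> flip_comb a b \<alpha> \<beta> = flip_comb a b \<alpha>' \<beta>'"
  unfolding flip_comb_def by (intro ext sum.cong) auto

lemma flip_comb_zero:
  "(\<And>j. a \<le> j \<Longrightarrow> j < b \<Longrightarrow> \<alpha> j = 0) \<Longrightarrow> (\<And>j. a \<le> j \<Longrightarrow> j < b \<Longrightarrow> \<beta> j = 0)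
    \<Longrightarrow> flip_comb a b \<alpha> \<beta> = op_zero"
  unfolding flip_comb_def op_zero_def by (intro ext sum.neutral) auto

lemma op_add_flip_comb: "op_add (flip_comb a b \<alpha> \<beta>) (op_scale c (flip_comb a b \<alpha>' \<beta>'))
    = flip_comb a b (\<lambda>j. \<alpha> j + c * \<alpha>' j) (\<lambda>j. \<beta> j + c * \<beta>' j)"
  unfolding flip_comb_def op_add_def op_scale_def
  by (simp add: distrib_right distrib_left sum.distrib sum_distrib_left mult.assoc add_ac)

lemma flip_comb_mult_eq:
  assumes lo: "\<And>k. k \<in> {a..<b} \<Longrightarrow> op_mult a b (flip_sgn_lo a b k) M = op_mult a b N (flip_comb a b (FA k) (FB k))"
    and hi: "\<And>k. k \<in> {a..<b} \<Longrightarrow> op_mult a b (flip_sgn_hi a b k) M = op_mult a b N (flip_comb a b (GA k) (GB k))"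
  shows "op_mult a b (flip_comb a b \<alpha> \<beta>) M = op_mult a b N (flip_comb a b
     (\<lambda>j. \<Sum>k\<in>{a..<b}. \<alpha> k * FA k j + \<beta> k * GA k j)
     (\<lambda>j. \<Sum>k\<in>{a..<b}. \<alpha> k * FB k j + \<beta> k * GB k j))"
proof (intro ext)
  fix \<tau> \<rho>
  let ?X = "\<lambda>j. op_mult a b N (flip_sgn_lo a b j) \<tau> \<rho>" and ?Y = "\<lambda>j. op_mult a b N (flip_sgn_hi a b j) \<tau> \<rho>"
  have "op_mult a b (flip_comb a b \<alpha> \<beta>) M \<tau> \<rho> = (\<Sum>k\<in>{a..<b}. \<alpha> k * (\<Sum>j\<in>{a..<b}. FA k j * ?X j + FB k j * ?Y j)
        + \<beta> k * (\<Sum>j\<in>{a..<b}. GA k j * ?X j + GB k j * ?Y j))"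
    unfolding flip_comb_mult_left using lo hi by (intro sum.cong) (simp_all add: flip_comb_mult_right)
  also have "\<dots> = (\<Sum>k\<in>{a..<b}. \<Sum>j\<in>{a..<b}. \<alpha> k * FA k j * ?X j + \<alpha> k * FB k j * ?Y j + \<beta> k * GA k j * ?X j + \<beta> k * GB k j * ?Y j)"
    by (simp add: sum_distrib_left sum.distrib[symmetric] algebra_simps)
  also have "\<dots> = (\<Sum>j\<in>{a..<b}. \<Sum>k\<in>{a..<b}. \<alpha> k * FA k j * ?X j + \<alpha> k * FB k j * ?Y j + \<beta> k * GA k j * ?X j + \<beta> k * GB k j * ?Y j)"
    by (rule sum.swap)
  also have "\<dots> = (\<Sum>j\<in>{a..<b}. (\<Sum>k\<in>{a..<b}. \<alpha> k * FA k j + \<beta> k * GA k j) * ?X j + (\<Sum>k\<in>{a..<b}. \<alpha> k * FB k j + \<beta> k * GB k j) * ?Y j)"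
    by (intro sum.cong refl) (simp add: sum_distrib_left sum_distrib_right sum.distrib algebra_simps)
  finally show "op_mult a b (flip_comb a b \<alpha> \<beta>) M \<tau> \<rho> = op_mult a b N (flip_comb a b
     (\<lambda>j. \<Sum>k\<in>{a..<b}. \<alpha> k * FA k j + \<beta> k * GA k j)
     (\<lambda>j. \<Sum>k\<in>{a..<b}. \<alpha> k * FB k j + \<beta> k * GB k j)) \<tau> \<rho>"
    unfolding flip_comb_mult_right .
qed

definition unit_coeff :: "int \<Rightarrow> complex \<Rightarrow> int \<Rightarrow> complex" where
  "unit_coeff k c = (\<lambda>j. if j = k then c else 0)"

lemma flip_comb_unit_coeff:
  "a \<le> k \<Longrightarrow> k < b \<Longrightarrow> flip_comb a b (unit_coeff k c) (unit_coeff k d)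
    = op_add (op_scale c (flip_sgn_lo a b k)) (op_scale d (flip_sgn_hi a b k))"
  unfolding flip_comb_def unit_coeff_def op_add_def op_scale_def
  by (intro ext) (simp add: sum.distrib if_distrib[where f="\<lambda>x. x * _"] sum.delta cong: if_cong)

abbreviation sqrt2 :: complex where "sqrt2 \<equiv> complex_of_real (sqrt 2)"
abbreviation ch :: complex where "ch \<equiv> complex_of_real (cosh beta_c)"
abbreviation sh :: complex where "sh \<equiv> complex_of_real (sinh beta_c)"

lemma sqrt2_squared: "sqrt2 * sqrt2 = 2"
  by (simp flip: of_real_mult)

lemma sqrt2_powers: "sqrt2 ^ 2 = 2" "sqrt2 ^ 3 = 2 * sqrt2" "sqrt2 ^ 4 = 4" "sqrt2 * (sqrt2 * x) = 2 * x"
proof -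
  show "sqrt2 ^ 2 = 2" by (simp add: power2_eq_square sqrt2_squared)
  then show "sqrt2 ^ 3 = 2 * sqrt2" "sqrt2 ^ 4 = 4"
    by (simp_all add: power3_eq_cube power4_eq_xxxx sqrt2_squared mult.assoc[symmetric])
  show "sqrt2 * (sqrt2 * x) = 2 * x" by (simp add: mult.assoc[symmetric] sqrt2_squared)
qed

lemma flip_op_cong: "(\<And>\<rho>. \<rho> \<in> Conf a b \<Longrightarrow> f \<rho> = g \<rho>) \<Longrightarrow> flip_op a b k f = flip_op a b k g"
  unfolding flip_op_def by (intro ext) auto

lemma op_add_flip_op: "op_add (op_scale c (flip_op a b k f)) (op_scale d (flip_op a b k g))
    = flip_op a b k (\<lambda>\<rho>. c * f \<rho> + d * g \<rho>)"
  unfolding op_add_def op_scale_def flip_op_def by (intro ext) simp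

lemma flip_op_mult_Th_half:
  "op_mult a b (flip_op a b k c) (Th_half a b) = flip_op a b k (\<lambda>\<rho>. c \<rho> * Th_half_entry a b \<rho>)"
  unfolding Th_half_mult_right flip_op_def by (intro ext) auto

lemma Th_half_mult_flip_op:
  "k \<le> b \<Longrightarrow> op_mult a b (Th_half a b) (flip_op a b k c) = flip_op a b k (\<lambda>\<rho>. Th_half_entry a b (flip a k \<rho>) * c \<rho>)"
  unfolding Th_half_mult_left flip_op_def by (intro ext) auto

lemma Th_half_entry_flip:
  assumes "a \<le> k" "k < b"
  shows "Th_half_entry a b \<rho> = Th_half_entry a b (flip a k \<rho>) * complex_of_real (exp (beta_c * of_int (\<rho> k * \<rho> (k + 1))))"
proof -
  have "(\<Sum>x\<in>{a..<b}. real_of_int (\<rho> x * \<rho> (x + 1)))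
      = (\<Sum>x\<in>{a..<b}. real_of_int (flip a k \<rho> x * flip a k \<rho> (x + 1)))
        + (real_of_int (\<rho> k * \<rho> (k + 1)) - real_of_int (flip a k \<rho> k * flip a k \<rho> (k + 1)))"
    using assms by (intro sum_eq_sum_plus_diff) (auto simp: flip_def)
  also have "real_of_int (\<rho> k * \<rho> (k + 1)) - real_of_int (flip a k \<rho> k * flip a k \<rho> (k + 1))
      = 2 * real_of_int (\<rho> k * \<rho> (k + 1))"
    using assms by (simp add: flip_def)
  finally show ?thesis unfolding Th_half_entry_def by (simp add: distrib_left exp_add mult.commute)
qed

lemma flip_sgn_mult_Th_half:
  assumes "a \<le> k" "k < b"
  shows "op_mult a b (flip_sgn_lo a b k) (Th_half a b)
      = op_mult a b (Th_half a b) (flip_comb a b (unit_coeff k ch) (unit_coeff k sh))"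
    and "op_mult a b (flip_sgn_hi a b k) (Th_half a b)
      = op_mult a b (Th_half a b) (flip_comb a b (unit_coeff k sh) (unit_coeff k ch))"
proof -
  have "of_int (\<rho> k) * Th_half_entry a b \<rho> = Th_half_entry a b (flip a k \<rho>) * (ch * of_int (\<rho> k) + sh * of_int (\<rho> (k + 1)))"
    and "of_int (\<rho> (k + 1)) * Th_half_entry a b \<rho> = Th_half_entry a b (flip a k \<rho>) * (sh * of_int (\<rho> k) + ch * of_int (\<rho> (k + 1)))"
    if "\<rho> \<in> Conf a b" for \<rho>
  proof -
    have "complex_of_real (of_int (\<rho> k) * exp (beta_c * of_int (\<rho> k * \<rho> (k + 1))))
        = complex_of_real (cosh beta_c * of_int (\<rho> k) + sinh beta_c * of_int (\<rho> (k + 1)))"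
      and "complex_of_real (of_int (\<rho> (k + 1)) * exp (beta_c * of_int (\<rho> (k + 1) * \<rho> k)))
        = complex_of_real (cosh beta_c * of_int (\<rho> (k + 1)) + sinh beta_c * of_int (\<rho> k))"
      by (simp_all only: sign_mult_exp_beta_c Conf_values[OF that])
    then show "of_int (\<rho> k) * Th_half_entry a b \<rho> = Th_half_entry a b (flip a k \<rho>) * (ch * of_int (\<rho> k) + sh * of_int (\<rho> (k + 1)))"
      and "of_int (\<rho> (k + 1)) * Th_half_entry a b \<rho> = Th_half_entry a b (flip a k \<rho>) * (sh * of_int (\<rho> k) + ch * of_int (\<rho> (k + 1)))"
      using Th_half_entry_flip[OF assms, of \<rho>] by (simp_all add: mult.commute mult.left_commute)
  qed
  then show "op_mult a b (flip_sgn_lo a b k) (Th_half a b)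
      = op_mult a b (Th_half a b) (flip_comb a b (unit_coeff k ch) (unit_coeff k sh))"
    and "op_mult a b (flip_sgn_hi a b k) (Th_half a b)
      = op_mult a b (Th_half a b) (flip_comb a b (unit_coeff k sh) (unit_coeff k ch))"
    using assms unfolding flip_comb_unit_coeff[OF assms] flip_sgn_lo_def flip_sgn_hi_def op_add_flip_op
    by (simp_all add: flip_op_mult_Th_half Th_half_mult_flip_op cong: flip_op_cong)
qed

lemma sum_unit_coeff: "k \<in> {a..<b} \<Longrightarrow> (\<Sum>j\<in>{a..<b}. \<alpha> j * unit_coeff j c k) = \<alpha> k * c"
  unfolding unit_coeff_def by (simp add: if_distrib[where f="\<lambda>x. _ * x"] sum.delta' cong: if_cong)

lemma flip_comb_mult_Th_half: "op_mult a b (flip_comb a b \<alpha> \<beta>) (Th_half a b) = op_mult a b (Th_half a b)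
   (flip_comb a b (\<lambda>j. ch * \<alpha> j + sh * \<beta> j) (\<lambda>j. sh * \<alpha> j + ch * \<beta> j))"
proof -
  have "op_mult a b (flip_comb a b \<alpha> \<beta>) (Th_half a b) = op_mult a b (Th_half a b) (flip_comb a b
     (\<lambda>j. \<Sum>k\<in>{a..<b}. \<alpha> k * unit_coeff k ch j + \<beta> k * unit_coeff k sh j)
     (\<lambda>j. \<Sum>k\<in>{a..<b}. \<alpha> k * unit_coeff k sh j + \<beta> k * unit_coeff k ch j))"
    by (rule flip_comb_mult_eq) (auto intro: flip_sgn_mult_Th_half)
  also have "\<dots> = op_mult a b (Th_half a b)
     (flip_comb a b (\<lambda>j. ch * \<alpha> j + sh * \<beta> j) (\<lambda>j. sh * \<alpha> j + ch * \<beta> j))"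
    by (intro arg_cong[where f = "op_mult a b (Th_half a b)"] flip_comb_cong)
      (simp_all add: sum.distrib sum_unit_coeff algebra_simps)
  finally show ?thesis .
qed

lemma sign_identities:
  assumes "s = 1 \<or> s = -1" and "t = 1 \<or> t = -1"
  shows "- complex_of_int t = sqrt2 * of_int s - complex_of_real (exp (beta_c * (2 * of_int (t * s)))) * of_int s"
    and "complex_of_int t = sqrt2 * of_int s - complex_of_real (exp (- (beta_c * (2 * of_int (t * s))))) * of_int s"
proof -
  have "complex_of_real (- real_of_int t) = complex_of_real (sqrt 2 * of_int s - exp (beta_c * (2 * of_int (t * s))) * of_int s)"
    and "complex_of_real (real_of_int t) = complex_of_real (sqrt 2 * of_int s - exp (- (beta_c * (2 * of_int (t * s)))) * of_int s)"
    using assms exp_2beta_c exp_minus_2beta_c by (elim disjE; simp add: mult.commute)+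
  then show "- complex_of_int t = sqrt2 * of_int s - complex_of_real (exp (beta_c * (2 * of_int (t * s)))) * of_int s"
    and "complex_of_int t = sqrt2 * of_int s - complex_of_real (exp (- (beta_c * (2 * of_int (t * s))))) * of_int s"
    by simp_all
qed

lemma Tv_flip_left:
  assumes "a \<le> k" "k < b"
  shows "Tv a b (flip a k \<tau>) \<rho> = Tv a b \<tau> (flip a k \<rho>)"
proof -
  have "(\<Sum>x\<in>{a..b}. real_of_int (\<rho> x * flip a k \<tau> x)) = (\<Sum>x\<in>{a..b}. real_of_int (flip a k \<rho> x * \<tau> x))"
    by (intro sum.cong) (auto simp: flip_def)
  moreover have "(flip a k \<tau> a = \<rho> a) = (\<tau> a = flip a k \<rho> a)" "flip a k \<tau> b = \<tau> b" "flip a k \<rho> b = \<rho> b"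
    using assms by (auto simp: flip_def)
  ultimately show ?thesis unfolding Tv_def using assms by auto
qed

lemma Tv_flip_pred:
  assumes "a < k" "k < b"
  shows "Tv a b \<tau> (flip a (k - 1) \<rho>) = Tv a b \<tau> (flip a k \<rho>) * complex_of_real (exp (beta_c * (2 * of_int (\<tau> k * \<rho> k))))"
proof -
  have "(\<Sum>x\<in>{a..b}. real_of_int (flip a (k - 1) \<rho> x * \<tau> x)) = (\<Sum>x\<in>{a..b}. real_of_int (flip a k \<rho> x * \<tau> x))
      + (real_of_int (flip a (k - 1) \<rho> k * \<tau> k) - real_of_int (flip a k \<rho> k * \<tau> k))"
    using assms by (intro sum_eq_sum_plus_diff) (auto simp: flip_def)
  moreover have "real_of_int (flip a (k - 1) \<rho> k * \<tau> k) - real_of_int (flip a k \<rho> k * \<tau> k) = 2 * of_int (\<tau> k * \<rho> k)"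
    using assms by (simp add: flip_def)
  moreover have "flip a (k - 1) \<rho> a = flip a k \<rho> a" "flip a (k - 1) \<rho> b = \<rho> b" "flip a k \<rho> b = \<rho> b"
    using assms by (auto simp: flip_def)
  ultimately show ?thesis unfolding Tv_def using assms by (auto simp: distrib_left exp_add)
qed

lemma Tv_nonzeroD: "Tv a b \<tau> \<sigma> \<noteq> 0 \<Longrightarrow> \<tau> \<in> Conf a b \<and> \<sigma> \<in> Conf a b \<and> \<tau> a = \<sigma> a \<and> \<tau> b = \<sigma> b"
  unfolding Tv_def by (auto split: if_splits)

lemma flip_sgn_lo_mult_Tv:
  assumes "a \<le> k" "k < b"
  shows "op_mult a b (flip_sgn_lo a b k) (Tv a b) \<tau> \<rho> =
     (if k = a then 1 else sqrt2) * op_mult a b (Tv a b) (flip_sgn_lo a b k) \<tau> \<rho>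
     - (if a < k then op_mult a b (Tv a b) (flip_sgn_hi a b (k - 1)) \<tau> \<rho> else 0)"
proof -
  let ?W = "Tv a b \<tau> (flip a k \<rho>)"
  have L: "op_mult a b (flip_sgn_lo a b k) (Tv a b) \<tau> \<rho> = (if \<tau> \<in> Conf a b then - of_int (\<tau> k) * ?W else 0)"
    unfolding flip_sgn_lo_def using assms by (simp add: flip_op_mult_left Tv_flip_left flip_apply_inside)
  have R: "op_mult a b (Tv a b) (flip_sgn_lo a b k) \<tau> \<rho> = (if \<rho> \<in> Conf a b then ?W * of_int (\<rho> k) else 0)"
    unfolding flip_sgn_lo_def using assms by (simp add: flip_op_mult_right)
  have R': "op_mult a b (Tv a b) (flip_sgn_hi a b (k - 1)) \<tau> \<rho>
      = (if \<rho> \<in> Conf a b then ?W * complex_of_real (exp (beta_c * (2 * of_int (\<tau> k * \<rho> k)))) * of_int (\<rho> k) else 0)"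
    if "a < k"
    unfolding flip_sgn_hi_def using assms that by (simp add: flip_op_mult_right Tv_flip_pred)
  show ?thesis
  proof (cases "?W = 0")
    case True
    then show ?thesis unfolding L R using R' by auto
  next
    case False
    from Tv_nonzeroD[OF False] assms have Conf: "\<tau> \<in> Conf a b" "\<rho> \<in> Conf a b" and "\<tau> a = - \<rho> a"
      by (auto simp: flip_apply_inside)
    show ?thesis
    proof (cases "k = a")
      case True
      then show ?thesis unfolding L R using Conf \<open>\<tau> a = - \<rho> a\<close> by simp
    next
      case False
      with assms have "a < k" by simp
      have "- complex_of_int (\<tau> k) * ?W = (sqrt2 * of_int (\<rho> k)
          - complex_of_real (exp (beta_c * (2 * of_int (\<tau> k * \<rho> k)))) * of_int (\<rho> k)) * ?W"
        using sign_identities(1)[OF Conf_values[OF Conf(2)] Conf_values[OF Conf(1)], of k k] by simp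
      then show ?thesis unfolding L R R'[OF \<open>a < k\<close>] using Conf False \<open>a < k\<close>
        by (simp add: algebra_simps)
    qed
  qed
qed

lemma flip_sgn_hi_mult_Tv:
  assumes "a \<le> k" "k < b"
  shows "op_mult a b (flip_sgn_hi a b k) (Tv a b) \<tau> \<rho> =
     (if k = b - 1 then 1 else sqrt2) * op_mult a b (Tv a b) (flip_sgn_hi a b k) \<tau> \<rho>
     - (if k < b - 1 then op_mult a b (Tv a b) (flip_sgn_lo a b (k + 1)) \<tau> \<rho> else 0)"
proof -
  let ?W = "Tv a b \<tau> (flip a k \<rho>)"
  have L: "op_mult a b (flip_sgn_hi a b k) (Tv a b) \<tau> \<rho> = (if \<tau> \<in> Conf a b then of_int (\<tau> (k + 1)) * ?W else 0)"
    unfolding flip_sgn_hi_def using assms by (simp add: flip_op_mult_left Tv_flip_left flip_apply_outside)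
  have R: "op_mult a b (Tv a b) (flip_sgn_hi a b k) \<tau> \<rho> = (if \<rho> \<in> Conf a b then ?W * of_int (\<rho> (k + 1)) else 0)"
    unfolding flip_sgn_hi_def using assms by (simp add: flip_op_mult_right)
  have R': "op_mult a b (Tv a b) (flip_sgn_lo a b (k + 1)) \<tau> \<rho>
      = (if \<rho> \<in> Conf a b then ?W * complex_of_real (exp (- (beta_c * (2 * of_int (\<tau> (k + 1) * \<rho> (k + 1)))))) * of_int (\<rho> (k + 1)) else 0)"
    if "k < b - 1"
  proof -
    have "?W = Tv a b \<tau> (flip a (k + 1) \<rho>) * complex_of_real (exp (beta_c * (2 * of_int (\<tau> (k + 1) * \<rho> (k + 1)))))"
      using Tv_flip_pred[of a "k + 1" b \<tau> \<rho>] assms that by simp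
    then have "Tv a b \<tau> (flip a (k + 1) \<rho>) = ?W * complex_of_real (exp (- (beta_c * (2 * of_int (\<tau> (k + 1) * \<rho> (k + 1))))))"
      by (simp add: mult.assoc flip: of_real_mult exp_add)
    then show ?thesis unfolding flip_sgn_lo_def using assms that by (simp add: flip_op_mult_right)
  qed
  show ?thesis
  proof (cases "?W = 0")
    case True
    then show ?thesis unfolding L R using R' by auto
  next
    case False
    from Tv_nonzeroD[OF False] assms have Conf: "\<tau> \<in> Conf a b" "\<rho> \<in> Conf a b" and "\<tau> b = \<rho> b"
      by (auto simp: flip_apply_outside)
    show ?thesis
    proof (cases "k = b - 1")
      case True
      then show ?thesis unfolding L R using Conf \<open>\<tau> b = \<rho> b\<close> by simp
    next
      case False
      with assms have "k < b - 1" by simp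
      have "complex_of_int (\<tau> (k + 1)) * ?W = (sqrt2 * of_int (\<rho> (k + 1))
          - complex_of_real (exp (- (beta_c * (2 * of_int (\<tau> (k + 1) * \<rho> (k + 1)))))) * of_int (\<rho> (k + 1))) * ?W"
        using sign_identities(2)[OF Conf_values[OF Conf(2)] Conf_values[OF Conf(1)], of "k + 1" "k + 1"] by simp
      then show ?thesis unfolding L R R'[OF \<open>k < b - 1\<close>] using Conf False \<open>k < b - 1\<close>
        by (simp add: algebra_simps)
    qed
  qed
qed

lemma flip_comb_mult_Tv: "op_mult a b (flip_comb a b \<alpha> \<beta>) (Tv a b) = op_mult a b (Tv a b) (flip_comb a b
     (\<lambda>j. (if j = a then 1 else sqrt2) * \<alpha> j - (if a < j then \<beta> (j - 1) else 0))
     (\<lambda>j. (if j = b - 1 then 1 else sqrt2) * \<beta> j - (if j < b - 1 then \<alpha> (j + 1) else 0)))"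
proof -
  let ?FA = "\<lambda>k j. if j = k then (if k = a then 1 else sqrt2) else 0"
  let ?FB = "\<lambda>k j. if a < k \<and> j = k - 1 then -1 else (0::complex)"
  let ?GA = "\<lambda>k j. if k < b - 1 \<and> j = k + 1 then -1 else (0::complex)"
  let ?GB = "\<lambda>k j. if j = k then (if k = b - 1 then 1 else sqrt2) else 0"
  have "op_mult a b (flip_comb a b \<alpha> \<beta>) (Tv a b) = op_mult a b (Tv a b) (flip_comb a b
     (\<lambda>j. \<Sum>k\<in>{a..<b}. \<alpha> k * ?FA k j + \<beta> k * ?GA k j)
     (\<lambda>j. \<Sum>k\<in>{a..<b}. \<alpha> k * ?FB k j + \<beta> k * ?GB k j))"
  proof (rule flip_comb_mult_eq; intro ext)
    fix k \<tau> \<rho> assume k: "k \<in> {a..<b}"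
    show "op_mult a b (flip_sgn_lo a b k) (Tv a b) \<tau> \<rho> = op_mult a b (Tv a b) (flip_comb a b (?FA k) (?FB k)) \<tau> \<rho>"
      using k by (simp add: flip_comb_mult_right flip_sgn_lo_mult_Tv sum.distrib if_distrib[where f="\<lambda>x. x * _"]
          sum.delta cong: if_cong)
    show "op_mult a b (flip_sgn_hi a b k) (Tv a b) \<tau> \<rho> = op_mult a b (Tv a b) (flip_comb a b (?GA k) (?GB k)) \<tau> \<rho>"
      using k by (simp add: flip_comb_mult_right flip_sgn_hi_mult_Tv sum.distrib if_distrib[where f="\<lambda>x. x * _"]
          sum.delta cong: if_cong)
  qed
  also have "\<dots> = op_mult a b (Tv a b) (flip_comb a b
     (\<lambda>j. (if j = a then 1 else sqrt2) * \<alpha> j - (if a < j then \<beta> (j - 1) else 0))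
     (\<lambda>j. (if j = b - 1 then 1 else sqrt2) * \<beta> j - (if j < b - 1 then \<alpha> (j + 1) else 0)))"
  proof (intro arg_cong[where f = "op_mult a b (Tv a b)"] flip_comb_cong)
    fix j assume j: "a \<le> j" "j < b"
    have "(\<Sum>k\<in>{a..<b}. \<beta> k * ?GA k j) = (\<Sum>k\<in>{a..<b}. if k = j - 1 then (if a < j then - \<beta> k else 0) else 0)"
      "(\<Sum>k\<in>{a..<b}. \<alpha> k * ?FA k j) = (\<Sum>k\<in>{a..<b}. if k = j then (if j = a then 1 else sqrt2) * \<alpha> k else 0)"
      "(\<Sum>k\<in>{a..<b}. \<alpha> k * ?FB k j) = (\<Sum>k\<in>{a..<b}. if k = j + 1 then (if j < b - 1 then - \<alpha> k else 0) else 0)"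
      "(\<Sum>k\<in>{a..<b}. \<beta> k * ?GB k j) = (\<Sum>k\<in>{a..<b}. if k = j then (if j = b - 1 then 1 else sqrt2) * \<beta> k else 0)"
      using j by (intro sum.cong; auto)+
    then show "(\<Sum>k\<in>{a..<b}. \<alpha> k * ?FA k j + \<beta> k * ?GA k j) = (if j = a then 1 else sqrt2) * \<alpha> j - (if a < j then \<beta> (j - 1) else 0)"
      "(\<Sum>k\<in>{a..<b}. \<alpha> k * ?FB k j + \<beta> k * ?GB k j) = (if j = b - 1 then 1 else sqrt2) * \<beta> j - (if j < b - 1 then \<alpha> (j + 1) else 0)"
      using j by (simp_all add: sum.distrib sum.delta)
  qed
  finally show ?thesis .
qed

text \<open>The coefficients of \<open>T\<inverse> (flip_comb \<alpha> \<beta>) T\<close>: each factor \<open>T\<^sub>h\<^sup>1\<^sup>/\<^sup>2\<close> acts on them by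
  the hyperbolic rotation \<open>(ch, sh)\<close> and \<open>T\<^sub>v\<close> by a nearest-neighbour shift; at \<open>\<beta>\<^sub>c\<close>
  the products \<open>ch\<^sup>2, sh\<^sup>2, ch sh\<close> are \<open>(\<surd>2 + 1)/2, (\<surd>2 - 1)/2, 1/2\<close>.\<close>

definition step_lo :: "int \<Rightarrow> int \<Rightarrow> (int \<Rightarrow> complex) \<Rightarrow> (int \<Rightarrow> complex) \<Rightarrow> int \<Rightarrow> complex" where
  "step_lo a b \<alpha> \<beta> = (\<lambda>j.
      (if j = a then 1 else sqrt2) * ((sqrt2 + 1) / 2 * \<alpha> j + \<beta> j / 2)
    + (if j = b - 1 then 1 else sqrt2) * ((sqrt2 - 1) / 2 * \<alpha> j + \<beta> j / 2)
    - (if a < j then \<alpha> (j - 1) / 2 + (sqrt2 + 1) / 2 * \<beta> (j - 1) else 0)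
    - (if j < b - 1 then \<alpha> (j + 1) / 2 + (sqrt2 - 1) / 2 * \<beta> (j + 1) else 0))"

definition step_hi :: "int \<Rightarrow> int \<Rightarrow> (int \<Rightarrow> complex) \<Rightarrow> (int \<Rightarrow> complex) \<Rightarrow> int \<Rightarrow> complex" where
  "step_hi a b \<alpha> \<beta> = (\<lambda>j.
      (if j = a then 1 else sqrt2) * (\<alpha> j / 2 + (sqrt2 - 1) / 2 * \<beta> j)
    + (if j = b - 1 then 1 else sqrt2) * (\<alpha> j / 2 + (sqrt2 + 1) / 2 * \<beta> j)
    - (if a < j then (sqrt2 - 1) / 2 * \<alpha> (j - 1) + \<beta> (j - 1) / 2 else 0)
    - (if j < b - 1 then (sqrt2 + 1) / 2 * \<alpha> (j + 1) + \<beta> (j + 1) / 2 else 0))"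

lemma ch_sh_products: "ch * (ch * x) = (sqrt2 + 1) / 2 * x" "sh * (sh * x) = (sqrt2 - 1) / 2 * x"
    "ch * (sh * x) = x / 2" "sh * (ch * x) = x / 2"
proof -
  have "ch * ch = (sqrt2 + 1) / 2" "sh * sh = (sqrt2 - 1) / 2" "ch * sh = 1 / 2"
    using cosh_beta_c_squared sinh_beta_c_squared cosh_sinh_beta_c
    by (metis of_real_1 of_real_add of_real_diff of_real_divide of_real_mult of_real_numeral)+
  then show "ch * (ch * x) = (sqrt2 + 1) / 2 * x" "sh * (sh * x) = (sqrt2 - 1) / 2 * x"
    "ch * (sh * x) = x / 2" "sh * (ch * x) = x / 2"
    by (simp_all add: mult.assoc[symmetric] mult.commute[of sh ch])
qed

lemma flip_comb_mult_Tmat: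
  "op_mult a b (flip_comb a b \<alpha> \<beta>) (Tmat a b) = op_mult a b (Tmat a b) (flip_comb a b (step_lo a b \<alpha> \<beta>) (step_hi a b \<alpha> \<beta>))"
proof -
  let ?H = "Th_half a b" and ?V = "Tv a b" and ?m = "op_mult a b"
  let ?hlo = "\<lambda>\<alpha> \<beta> j. ch * \<alpha> j + sh * \<beta> j" and ?hhi = "\<lambda>\<alpha> \<beta> j. sh * \<alpha> j + ch * \<beta> j"
  let ?vlo = "\<lambda>\<alpha> \<beta> j. (if j = a then 1 else sqrt2) * \<alpha> j - (if a < j then \<beta> (j - 1) else 0)"
  let ?vhi = "\<lambda>\<alpha> \<beta> j. (if j = b - 1 then 1 else sqrt2) * \<beta> j - (if j < b - 1 then \<alpha> (j + 1) else 0)"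
  let ?\<alpha>1 = "?hlo \<alpha> \<beta>" and ?\<beta>1 = "?hhi \<alpha> \<beta>"
  let ?\<alpha>2 = "?vlo ?\<alpha>1 ?\<beta>1" and ?\<beta>2 = "?vhi ?\<alpha>1 ?\<beta>1"
  have "?m (flip_comb a b \<alpha> \<beta>) (?m (?m ?H ?V) ?H) = ?m (?m (?m (flip_comb a b \<alpha> \<beta>) ?H) ?V) ?H"
    by (simp only: op_mult_assoc)
  also have "\<dots> = ?m ?H (?m (?m (flip_comb a b ?\<alpha>1 ?\<beta>1) ?V) ?H)"
    by (simp only: flip_comb_mult_Th_half op_mult_assoc)
  also have "\<dots> = ?m ?H (?m ?V (?m (flip_comb a b ?\<alpha>2 ?\<beta>2) ?H))"
    by (simp only: flip_comb_mult_Tv op_mult_assoc)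
  also have "\<dots> = ?m (?m (?m ?H ?V) ?H) (flip_comb a b (?hlo ?\<alpha>2 ?\<beta>2) (?hhi ?\<alpha>2 ?\<beta>2))"
    by (simp only: flip_comb_mult_Th_half op_mult_assoc)
  also have "flip_comb a b (?hlo ?\<alpha>2 ?\<beta>2) (?hhi ?\<alpha>2 ?\<beta>2) = flip_comb a b (step_lo a b \<alpha> \<beta>) (step_hi a b \<alpha> \<beta>)"
    unfolding step_lo_def step_hi_def
    by (intro flip_comb_cong) (auto simp: algebra_simps ch_sh_products)
  finally show ?thesis unfolding Tmat_def .
qed

lemma op_transpose_flip_op:
  assumes "k \<le> b"
  shows "op_transpose (flip_op a b k c) = flip_op a b k (\<lambda>\<rho>. c (flip a k \<rho>))"
proof (intro ext)
  fix \<tau> \<rho>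
  have "(\<tau> \<in> Conf a b \<and> \<rho> = flip a k \<tau>) = (\<rho> \<in> Conf a b \<and> \<tau> = flip a k \<rho>)"
    by (rule flip_eq_iff_flip[OF assms])
  then show "op_transpose (flip_op a b k c) \<tau> \<rho> = flip_op a b k (\<lambda>\<rho>. c (flip a k \<rho>)) \<tau> \<rho>"
    unfolding op_transpose_def flip_op_def by auto
qed

lemma op_transpose_flip_comb: "op_transpose (flip_comb a b \<alpha> \<beta>) = flip_comb a b (\<lambda>j. - \<alpha> j) \<beta>"
proof -
  have "op_transpose (flip_sgn_lo a b j) = flip_op a b j (\<lambda>\<rho>. - of_int (\<rho> j))"
    "op_transpose (flip_sgn_hi a b j) = flip_sgn_hi a b j" if "a \<le> j" "j < b" for j
    using that unfolding flip_sgn_lo_def flip_sgn_hi_def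
    by (simp_all add: op_transpose_flip_op flip_apply_inside flip_apply_outside)
  then have gen: "op_transpose (flip_sgn_lo a b j) \<tau> \<rho> = - flip_sgn_lo a b j \<tau> \<rho>"
    "op_transpose (flip_sgn_hi a b j) \<tau> \<rho> = flip_sgn_hi a b j \<tau> \<rho>" if "a \<le> j" "j < b" for j \<tau> \<rho>
    using that unfolding flip_sgn_lo_def flip_op_def by simp_all
  show ?thesis
  proof (intro ext)
    fix \<tau> \<rho>
    have "op_transpose (flip_comb a b \<alpha> \<beta>) \<tau> \<rho> = (\<Sum>j\<in>{a..<b}.
        \<alpha> j * op_transpose (flip_sgn_lo a b j) \<tau> \<rho> + \<beta> j * op_transpose (flip_sgn_hi a b j) \<tau> \<rho>)"
      unfolding op_transpose_def flip_comb_def ..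
    also have "\<dots> = flip_comb a b (\<lambda>j. - \<alpha> j) \<beta> \<tau> \<rho>"
      unfolding flip_comb_def using gen by (intro sum.cong) auto
    finally show "op_transpose (flip_comb a b \<alpha> \<beta>) \<tau> \<rho> = flip_comb a b (\<lambda>j. - \<alpha> j) \<beta> \<tau> \<rho>" .
  qed
qed

text \<open>\<open>T\<close> is symmetric and transposition negates the \<open>flip_sgn_lo\<close> generators, so
  commuting \<open>T\<close> from the left reduces to commuting it from the right.\<close>

lemma Tmat_mult_flip_comb:
  "op_mult a b (Tmat a b) (flip_comb a b \<alpha> \<beta>)
    = op_mult a b (flip_comb a b (\<lambda>j. - step_lo a b (\<lambda>j. - \<alpha> j) \<beta> j) (step_hi a b (\<lambda>j. - \<alpha> j) \<beta>)) (Tmat a b)"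
proof -
  have "op_mult a b (Tmat a b) (flip_comb a b \<alpha> \<beta>) = op_transpose (op_mult a b (flip_comb a b (\<lambda>j. - \<alpha> j) \<beta>) (Tmat a b))"
    unfolding op_transpose_mult op_transpose_Tmat op_transpose_flip_comb by simp
  also have "\<dots> = op_mult a b (flip_comb a b (\<lambda>j. - step_lo a b (\<lambda>j. - \<alpha> j) \<beta> j) (step_hi a b (\<lambda>j. - \<alpha> j) \<beta>)) (Tmat a b)"
    unfolding flip_comb_mult_Tmat op_transpose_mult op_transpose_Tmat op_transpose_flip_comb ..
  finally show ?thesis .
qed

context
  fixes a b :: int
  assumes ab: "a < b"
begin

lemma op_conj_Tmat_1_flip_comb:
  "op_conj a b (Tmat a b) 1 (flip_comb a b \<alpha> \<beta>) = flip_comb a b (step_lo a b \<alpha> \<beta>) (step_hi a b \<alpha> \<beta>)"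
proof -
  have "op_conj a b (Tmat a b) 1 (flip_comb a b \<alpha> \<beta>)
      = op_mult a b (op_mult a b (Tmat_inv a b) (Tmat a b)) (flip_comb a b (step_lo a b \<alpha> \<beta>) (step_hi a b \<alpha> \<beta>))"
    unfolding op_conj_1[OF op_inverse_Tmat[OF ab]] flip_comb_mult_Tmat by (simp only: op_mult_assoc)
  then show ?thesis
    using op_inverse_Tmat[OF ab] by (simp add: op_inverse_def op_mult_id_left is_op_flip_comb)
qed

lemma op_conj_Tmat_minus1_flip_comb:
  "op_conj a b (Tmat a b) (-1) (flip_comb a b \<alpha> \<beta>)
    = flip_comb a b (\<lambda>j. - step_lo a b (\<lambda>j. - \<alpha> j) \<beta> j) (step_hi a b (\<lambda>j. - \<alpha> j) \<beta>)"
proof -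
  have "op_conj a b (Tmat a b) (-1) (flip_comb a b \<alpha> \<beta>)
      = op_mult a b (flip_comb a b (\<lambda>j. - step_lo a b (\<lambda>j. - \<alpha> j) \<beta> j) (step_hi a b (\<lambda>j. - \<alpha> j) \<beta>))
          (op_mult a b (Tmat a b) (Tmat_inv a b))"
    unfolding op_conj_minus1[OF op_inverse_Tmat[OF ab]] by (simp only: op_mult_assoc[symmetric] Tmat_mult_flip_comb)
  then show ?thesis
    using op_inverse_Tmat[OF ab] by (simp add: op_inverse_def op_mult_id_right is_op_flip_comb)
qed

lemma op_conj_Tmat_flip_comb: "\<exists>\<alpha>' \<beta>'. op_conj a b (Tmat a b) y (flip_comb a b \<alpha> \<beta>) = flip_comb a b \<alpha>' \<beta>'"
proof (induction y arbitrary: \<alpha> \<beta> rule: int_induct[where k = 0])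
  case base
  then show ?case using op_conj_0[OF op_inverse_Tmat[OF ab]] is_op_flip_comb by blast
next
  case (step1 y)
  then show ?case unfolding op_conj_add1[OF op_inverse_Tmat[OF ab]] op_conj_Tmat_1_flip_comb by blast
next
  case (step2 y)
  then show ?case unfolding op_conj_diff1[OF op_inverse_Tmat[OF ab]] op_conj_Tmat_minus1_flip_comb by blast
qed

end

lemma psi_gen_eq_flip_op: "psi_gen a b k = flip_op a b k (\<lambda>\<rho>. (- of_int (\<rho> k) + \<i> * of_int (\<rho> (k + 1))) / sqrt2)"
  and psis_gen_eq_flip_op: "psis_gen a b k = flip_op a b k (\<lambda>\<rho>. (- \<i> * of_int (\<rho> k) + of_int (\<rho> (k + 1))) / sqrt2)"
  unfolding psi_gen_def psis_gen_def flip_op_def by simp_all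

lemma psi_gen_eq_flip_comb:
  assumes "a \<le> k" "k < b"
  shows "psi_gen a b k = flip_comb a b (unit_coeff k (- 1 / sqrt2)) (unit_coeff k (\<i> / sqrt2))"
    and "psis_gen a b k = flip_comb a b (unit_coeff k (- \<i> / sqrt2)) (unit_coeff k (1 / sqrt2))"
  unfolding flip_comb_unit_coeff[OF assms] flip_sgn_lo_def flip_sgn_hi_def op_add_flip_op
    psi_gen_eq_flip_op psis_gen_eq_flip_op
  by (simp_all add: field_simps cong: flip_op_cong)

lemma flip_comb_in_CliffGen: "flip_comb a b \<alpha> \<beta> \<in> CliffGen a b"
  unfolding CliffGen_def
proof (intro CollectI exI ext)
  fix \<tau> \<rho>
  have "\<alpha> k * flip_sgn_lo a b k \<tau> \<rho> + \<beta> k * flip_sgn_hi a b k \<tau> \<rho> =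
      (- \<alpha> k - \<i> * \<beta> k) / sqrt2 * psi_gen a b k \<tau> \<rho> + (\<i> * \<alpha> k + \<beta> k) / sqrt2 * psis_gen a b k \<tau> \<rho>" for k
    unfolding flip_sgn_lo_def flip_sgn_hi_def psi_gen_eq_flip_op psis_gen_eq_flip_op flip_op_def
    by (simp add: field_simps sqrt2_squared)
  then show "flip_comb a b \<alpha> \<beta> \<tau> \<rho> = (\<Sum>k\<in>{a..<b}.
      (- \<alpha> k - \<i> * \<beta> k) / sqrt2 * psi_gen a b k \<tau> \<rho> + (\<i> * \<alpha> k + \<beta> k) / sqrt2 * psis_gen a b k \<tau> \<rho>)"
    unfolding flip_comb_def by simp
qed

section \<open>Lattice geometry\<close>

abbreviation vertex_pt :: "int \<Rightarrow> int \<Rightarrow> complex" where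
  "vertex_pt x y \<equiv> Complex (of_int x) (of_int y)"
abbreviation hedge_pt :: "int \<Rightarrow> int \<Rightarrow> complex" where
  "hedge_pt k y \<equiv> Complex (of_int k + 1/2) (of_int y)"
abbreviation vedge_pt :: "int \<Rightarrow> int \<Rightarrow> complex" where
  "vedge_pt x y \<equiv> Complex (of_int x) (of_int y + 1/2)"
abbreviation face_pt :: "int \<Rightarrow> int \<Rightarrow> complex" where
  "face_pt k y \<equiv> Complex (of_int k + 1/2) (of_int y + 1/2)"

abbreviation corner_eta :: "complex \<Rightarrow> complex \<Rightarrow> complex" where
  "corner_eta v p \<equiv> \<i> * of_real (cmod (v - p)) / (v - p)"

lemma half_int_neq_int: "(of_int k + 1/2 :: real) \<noteq> of_int x"
proof
  assume "(of_int k + 1/2 :: real) = of_int x"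
  then have "real_of_int (2 * k + 1) = real_of_int (2 * x)" by simp
  then have "2 * k + 1 = 2 * x" by linarith
  then show False by presburger
qed

lemma floor_half_int [simp]: "\<lfloor>(of_int k + 1/2 :: real)\<rfloor> = k"
  by (simp add: floor_eq_iff)

lemma hedge_hedge_pt: "hedge a b (hedge_pt k y) \<longleftrightarrow> a \<le> k \<and> k < b"
  and vedge_vedge_pt: "vedge a b (vedge_pt x y) \<longleftrightarrow> a \<le> x \<and> x \<le> b"
  and not_hedge_vedge_pt: "\<not> hedge a b (vedge_pt x y)"
  unfolding hedge_def vedge_def using half_int_neq_int by (auto simp: eq_commute[of "of_int _ + 1/2"])

lemma edge_cases:
  assumes "edge a b z"
  obtains (hedge) k y where "a \<le> k" "k < b" "z = hedge_pt k y"
    | (vedge) x y where "a \<le> x" "x \<le> b" "z = vedge_pt x y"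
  using assms unfolding edge_def hedge_def vedge_def by blast

lemma cmod_Complex_eq_half: "cmod (Complex u w) = 1/2 \<longleftrightarrow> u^2 + w^2 = 1/4"
proof -
  have "sqrt (u^2 + w^2) = 1/2 \<longleftrightarrow> u^2 + w^2 = (1/2)^2"
    by (metis real_sqrt_abs real_sqrt_power abs_of_nonneg sum_power2_ge_zero zero_le_divide_iff zero_le_one zero_le_numeral)
  then show ?thesis by (simp add: complex_norm power_divide)
qed

lemma int_square_plus_half_square:
  fixes m n :: int
  assumes "(of_int m)^2 + (of_int n + 1/2)^2 = (1/4::real)"
  shows "m = 0 \<and> (n = 0 \<or> n = -1)"
proof -
  have "real_of_int (m * m + n * (n + 1)) = 0" using assms by (simp add: power2_eq_square algebra_simps)
  then have "m * m + n * (n + 1) = 0" by linarith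
  moreover have "n * (n + 1) \<ge> 0" by (cases "n \<ge> 0") (simp_all add: mult_nonpos_nonpos)
  ultimately show ?thesis by (auto simp: zero_le_square add_nonneg_eq_0_iff)
qed

lemma edge_adjacent_to_corner:
  assumes "edge a b z" and "cmod (z - vertex_pt X Y) = 1/2" and "cmod (z - face_pt k y) = 1/2"
  shows "(X = k \<or> X = k + 1) \<and> (Y = y \<or> Y = y + 1) \<and> (z = hedge_pt k Y \<or> z = vedge_pt X y)"
  using assms(1)
proof (cases rule: edge_cases)
  case (hedge k' y')
  have zp: "z - face_pt k y = Complex (of_int (k' - k)) (of_int (y' - y) - 1/2)"
    and zv: "z - vertex_pt X Y = Complex (of_int (k' - X) + 1/2) (of_int (y' - Y))"
    unfolding hedge(3) by (simp_all add: complex_eq_iff)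
  have "(of_int (k' - k))^2 + (of_int (y - y') + 1/2)^2 = (1/4::real)"
    using assms(3)[unfolded zp cmod_Complex_eq_half] by (simp add: power2_eq_square algebra_simps)
  from int_square_plus_half_square[OF this] have "k' = k" "y' = y \<or> y' = y + 1" by auto
  moreover have "(of_int (y' - Y))^2 + (of_int (k' - X) + 1/2)^2 = (1/4::real)"
    using assms(2)[unfolded zv cmod_Complex_eq_half] by (simp add: power2_eq_square algebra_simps)
  from int_square_plus_half_square[OF this] have "Y = y'" "X = k' \<or> X = k' + 1" by auto
  ultimately show ?thesis using hedge(3) by auto
next
  case (vedge x' y')
  have zp: "z - face_pt k y = Complex (of_int (x' - k) - 1/2) (of_int (y' - y))"
    and zv: "z - vertex_pt X Y = Complex (of_int (x' - X)) (of_int (y' - Y) + 1/2)"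
    unfolding vedge(3) by (simp_all add: complex_eq_iff)
  have "(of_int (y' - y))^2 + (of_int (k - x') + 1/2)^2 = (1/4::real)"
    using assms(3)[unfolded zp cmod_Complex_eq_half] by (simp add: power2_eq_square algebra_simps)
  from int_square_plus_half_square[OF this] have "y' = y" "x' = k \<or> x' = k + 1" by auto
  moreover have "(of_int (x' - X))^2 + (of_int (y' - Y) + 1/2)^2 = (1/4::real)"
    using assms(2)[unfolded zv cmod_Complex_eq_half] by (simp add: power2_eq_square algebra_simps)
  from int_square_plus_half_square[OF this] have "X = x'" "Y = y' \<or> Y = y' + 1" by auto
  ultimately show ?thesis using vedge(3) by auto
qed

lemma corner_pair_cases:
  assumes "corner_pair a b z1 z2 v p"
  obtains k y X Y where "a \<le> k" "k < b" "p = face_pt k y" "v = vertex_pt X Y"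
    "X = k \<or> X = k + 1" "Y = y \<or> Y = y + 1"
    "z1 = hedge_pt k Y \<or> z1 = vedge_pt X y" "z2 = hedge_pt k Y \<or> z2 = vedge_pt X y"
proof -
  from assms obtain k y X Y where "a \<le> k" "k < b" "p = face_pt k y" "v = vertex_pt X Y"
    unfolding corner_pair_def face_def vertex_def by auto
  with assms edge_adjacent_to_corner[of a b z1 X Y k y] edge_adjacent_to_corner[of a b z2 X Y k y]
  show ?thesis using that unfolding corner_pair_def by auto
qed

lemma corner_pairI:
  assumes "a \<le> k" "k < b" "X = k \<or> X = k + 1" "Y = y \<or> Y = y + 1"
  shows "corner_pair a b (hedge_pt k Y) (vedge_pt X y) (vertex_pt X Y) (face_pt k y)"
proof -
  have "edge a b (hedge_pt k Y)" "edge a b (vedge_pt X y)" "vertex a b (vertex_pt X Y)" "face a b (face_pt k y)"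
    using assms unfolding edge_def vertex_def face_def by (auto simp: hedge_hedge_pt vedge_vedge_pt)
  moreover have diffs: "hedge_pt k Y - vertex_pt X Y = Complex (of_int (k - X) + 1/2) 0"
    "vedge_pt X y - vertex_pt X Y = Complex 0 (of_int (y - Y) + 1/2)"
    "hedge_pt k Y - face_pt k y = Complex 0 (of_int (Y - y) - 1/2)"
    "vedge_pt X y - face_pt k y = Complex (of_int (X - k) - 1/2) 0"
    by (simp_all add: complex_eq_iff)
  ultimately show ?thesis
    unfolding corner_pair_def diffs cmod_Complex_eq_half using assms by (auto simp: power2_eq_square)
qed

definition eta_BL :: complex where "eta_BL = - (1 + \<i>) / sqrt2"
definition eta_BR :: complex where "eta_BR = (\<i> - 1) / sqrt2"
definition eta_TL :: complex where "eta_TL = (1 - \<i>) / sqrt2"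
definition eta_TR :: complex where "eta_TR = (1 + \<i>) / sqrt2"

lemma corner_eta_diagonal:
  assumes "u^2 = 1/4" "w^2 = 1/4" and "\<i> * sqrt2 / 2 = \<eta> * (of_real u + \<i> * of_real w)"
  shows "\<i> * of_real (cmod (Complex u w)) / Complex u w = \<eta>"
proof -
  have "cmod (Complex u w) = sqrt (1/2)" using assms(1,2) by (simp add: complex_norm)
  also have "sqrt (1/2) = sqrt 2 / 2" by (rule real_sqrt_unique) (auto simp: power2_eq_square)
  finally have norm: "cmod (Complex u w) = sqrt 2 / 2" .
  have "of_real u + \<i> * of_real w \<noteq> 0" using assms(1) by (auto simp: complex_eq_iff)
  then have "\<i> * (sqrt2 / 2) / (of_real u + \<i> * of_real w) = \<eta>"
    using assms(3) by (simp add: divide_eq_eq)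
  then show ?thesis unfolding norm by (simp add: Complex_eq)
qed

lemma corner_eta_face:
  "corner_eta (vertex_pt k y) (face_pt k y) = eta_BL"
  "corner_eta (vertex_pt (k + 1) y) (face_pt k y) = eta_BR"
  "corner_eta (vertex_pt k (y + 1)) (face_pt k y) = eta_TL"
  "corner_eta (vertex_pt (k + 1) (y + 1)) (face_pt k y) = eta_TR"
proof -
  have diff: "vertex_pt X Y - face_pt k y = Complex (of_int (X - k) - 1/2) (of_int (Y - y) - 1/2)" for X Y
    by (simp add: complex_eq_iff)
  show "corner_eta (vertex_pt k y) (face_pt k y) = eta_BL"
    "corner_eta (vertex_pt (k + 1) y) (face_pt k y) = eta_BR"
    "corner_eta (vertex_pt k (y + 1)) (face_pt k y) = eta_TL"
    "corner_eta (vertex_pt (k + 1) (y + 1)) (face_pt k y) = eta_TR"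
    unfolding diff eta_BL_def eta_BR_def eta_TL_def eta_TR_def
    by (rule corner_eta_diagonal; simp add: field_simps sqrt2_squared power2_eq_square)+
qed

section \<open>The fermions\<close>

text \<open>The coefficients of \<open>\<psi>\<close> and \<open>\<psi>\<^sup>*\<close> on the vertical edge \<open>x + i/2\<close>: they solve the two corner
  relations with the bottom and top edge of an adjacent face.\<close>

definition psi_vert_lo :: "int \<Rightarrow> int \<Rightarrow> int \<Rightarrow> int \<Rightarrow> complex" where
  "psi_vert_lo a b x = (if x = a then unit_coeff a (- 1 / sqrt2) else if x = b then unit_coeff (b - 1) (\<i> * (1 - 1 / sqrt2))
     else (\<lambda>j. if j = x - 1 then ((2 - sqrt2) + sqrt2 * \<i>) / 4 else if j = x then - ((2 + sqrt2) + sqrt2 * \<i>) / 4 else 0))"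

definition psi_vert_hi :: "int \<Rightarrow> int \<Rightarrow> int \<Rightarrow> int \<Rightarrow> complex" where
  "psi_vert_hi a b x = (if x = a then unit_coeff a (- (1 - 1 / sqrt2)) else if x = b then unit_coeff (b - 1) (\<i> / sqrt2)
     else (\<lambda>j. if j = x - 1 then (sqrt2 + (2 + sqrt2) * \<i>) / 4 else if j = x then - (sqrt2 + (2 - sqrt2) * \<i>) / 4 else 0))"

definition psis_vert_lo :: "int \<Rightarrow> int \<Rightarrow> int \<Rightarrow> int \<Rightarrow> complex" where
  "psis_vert_lo a b x = (if x = a then unit_coeff a (- \<i> / sqrt2) else if x = b then unit_coeff (b - 1) (1 - 1 / sqrt2)
     else (\<lambda>j. if j = x - 1 then (sqrt2 + (2 - sqrt2) * \<i>) / 4 else if j = x then - (sqrt2 + (2 + sqrt2) * \<i>) / 4 else 0))"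

definition psis_vert_hi :: "int \<Rightarrow> int \<Rightarrow> int \<Rightarrow> int \<Rightarrow> complex" where
  "psis_vert_hi a b x = (if x = a then unit_coeff a (- \<i> * (1 - 1 / sqrt2)) else if x = b then unit_coeff (b - 1) (1 / sqrt2)
     else (\<lambda>j. if j = x - 1 then ((2 + sqrt2) + sqrt2 * \<i>) / 4 else if j = x then - ((2 - sqrt2) + sqrt2 * \<i>) / 4 else 0))"

lemmas vert_coeff_defs = psi_vert_lo_def psi_vert_hi_def psis_vert_lo_def psis_vert_hi_def unit_coeff_def

context
  fixes a b k j :: int
  assumes k: "a \<le> k" "k < b" and j: "a \<le> j" "j < b"
begin

lemma vert_coeff_corner_BL:
  "unit_coeff k (- 1 / sqrt2) j + eta_BL * unit_coeff k (- \<i> / sqrt2) j = psi_vert_lo a b k j + eta_BL * psis_vert_lo a b k j"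
  "unit_coeff k (\<i> / sqrt2) j + eta_BL * unit_coeff k (1 / sqrt2) j = psi_vert_hi a b k j + eta_BL * psis_vert_hi a b k j"
  using k j unfolding vert_coeff_defs eta_BL_def by (auto simp: field_simps sqrt2_squared sqrt2_powers)

lemma vert_coeff_corner_BR:
  "unit_coeff k (- 1 / sqrt2) j + eta_BR * unit_coeff k (- \<i> / sqrt2) j = psi_vert_lo a b (k + 1) j + eta_BR * psis_vert_lo a b (k + 1) j"
  "unit_coeff k (\<i> / sqrt2) j + eta_BR * unit_coeff k (1 / sqrt2) j = psi_vert_hi a b (k + 1) j + eta_BR * psis_vert_hi a b (k + 1) j"
  using k j unfolding vert_coeff_defs eta_BR_def by (auto simp: field_simps sqrt2_squared sqrt2_powers)

lemma vert_coeff_corner_TL: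
  "step_lo a b (unit_coeff k (- 1 / sqrt2)) (unit_coeff k (\<i> / sqrt2)) j
    + eta_TL * step_lo a b (unit_coeff k (- \<i> / sqrt2)) (unit_coeff k (1 / sqrt2)) j
    = psi_vert_lo a b k j + eta_TL * psis_vert_lo a b k j"
  "step_hi a b (unit_coeff k (- 1 / sqrt2)) (unit_coeff k (\<i> / sqrt2)) j
    + eta_TL * step_hi a b (unit_coeff k (- \<i> / sqrt2)) (unit_coeff k (1 / sqrt2)) j
    = psi_vert_hi a b k j + eta_TL * psis_vert_hi a b k j"
  using k j unfolding vert_coeff_defs eta_TL_def step_lo_def step_hi_def
  by (auto simp: field_simps sqrt2_squared sqrt2_powers)

lemma vert_coeff_corner_TR:
  "step_lo a b (unit_coeff k (- 1 / sqrt2)) (unit_coeff k (\<i> / sqrt2)) j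
    + eta_TR * step_lo a b (unit_coeff k (- \<i> / sqrt2)) (unit_coeff k (1 / sqrt2)) j
    = psi_vert_lo a b (k + 1) j + eta_TR * psis_vert_lo a b (k + 1) j"
  "step_hi a b (unit_coeff k (- 1 / sqrt2)) (unit_coeff k (\<i> / sqrt2)) j
    + eta_TR * step_hi a b (unit_coeff k (- \<i> / sqrt2)) (unit_coeff k (1 / sqrt2)) j
    = psi_vert_hi a b (k + 1) j + eta_TR * psis_vert_hi a b (k + 1) j"
  using k j unfolding vert_coeff_defs eta_TR_def step_lo_def step_hi_def
  by (auto simp: field_simps sqrt2_squared sqrt2_powers)

end

lemma vert_coeff_boundary:
  assumes "a < b" "a \<le> j" "j < b"
  shows "psi_vert_lo a b a j + \<i> * psis_vert_lo a b a j = 0" "psi_vert_hi a b a j + \<i> * psis_vert_hi a b a j = 0"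
    "psi_vert_lo a b b j + - \<i> * psis_vert_lo a b b j = 0" "psi_vert_hi a b b j + - \<i> * psis_vert_hi a b b j = 0"
  using assms unfolding vert_coeff_defs by (auto simp: field_simps)

definition psi_field :: "int \<Rightarrow> int \<Rightarrow> complex \<Rightarrow> op" where
  "psi_field a b z =
    (if hedge a b z then op_conj a b (Tmat a b) \<lfloor>Im z\<rfloor> (psi_gen a b \<lfloor>Re z\<rfloor>)
     else if vedge a b z then op_conj a b (Tmat a b) \<lfloor>Im z\<rfloor>
       (flip_comb a b (psi_vert_lo a b \<lfloor>Re z\<rfloor>) (psi_vert_hi a b \<lfloor>Re z\<rfloor>))
     else op_zero)"

definition psis_field :: "int \<Rightarrow> int \<Rightarrow> complex \<Rightarrow> op" where
  "psis_field a b z =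
    (if hedge a b z then op_conj a b (Tmat a b) \<lfloor>Im z\<rfloor> (psis_gen a b \<lfloor>Re z\<rfloor>)
     else if vedge a b z then op_conj a b (Tmat a b) \<lfloor>Im z\<rfloor>
       (flip_comb a b (psis_vert_lo a b \<lfloor>Re z\<rfloor>) (psis_vert_hi a b \<lfloor>Re z\<rfloor>))
     else op_zero)"

lemma psi_field_hedge_pt:
  assumes "a \<le> k" "k < b"
  shows "psi_field a b (hedge_pt k y) = op_conj a b (Tmat a b) y (psi_gen a b k)"
    and "psis_field a b (hedge_pt k y) = op_conj a b (Tmat a b) y (psis_gen a b k)"
  using assms unfolding psi_field_def psis_field_def by (simp_all add: hedge_hedge_pt)

lemma psi_field_vedge_pt:
  assumes "a \<le> x" "x \<le> b"
  shows "psi_field a b (vedge_pt x y) = op_conj a b (Tmat a b) y (flip_comb a b (psi_vert_lo a b x) (psi_vert_hi a b x))"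
    and "psis_field a b (vedge_pt x y) = op_conj a b (Tmat a b) y (flip_comb a b (psis_vert_lo a b x) (psis_vert_hi a b x))"
  using assms unfolding psi_field_def psis_field_def by (simp_all add: not_hedge_vedge_pt vedge_vedge_pt)

lemma op_conj_flip_comb_relation:
  assumes "\<And>j. a \<le> j \<Longrightarrow> j < b \<Longrightarrow> \<alpha> j + \<eta> * \<alpha>' j = \<gamma> j + \<eta> * \<gamma>' j"
    and "\<And>j. a \<le> j \<Longrightarrow> j < b \<Longrightarrow> \<beta> j + \<eta> * \<beta>' j = \<delta> j + \<eta> * \<delta>' j"
  shows "op_add (op_conj a b X y (flip_comb a b \<alpha> \<beta>)) (op_scale \<eta> (op_conj a b X y (flip_comb a b \<alpha>' \<beta>')))
       = op_add (op_conj a b X y (flip_comb a b \<gamma> \<delta>)) (op_scale \<eta> (op_conj a b X y (flip_comb a b \<gamma>' \<delta>')))"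
  unfolding op_conj_op_scale[symmetric] op_conj_op_add[symmetric] op_add_flip_comb
  using assms by (simp cong: flip_comb_cong)

lemma psi_field_corner:
  assumes "a \<le> k" "k < b" and X: "X = k \<or> X = k + 1" and Y: "Y = y \<or> Y = y + 1"
  shows "op_add (psi_field a b (hedge_pt k Y)) (op_scale (corner_eta (vertex_pt X Y) (face_pt k y)) (psis_field a b (hedge_pt k Y)))
       = op_add (psi_field a b (vedge_pt X y)) (op_scale (corner_eta (vertex_pt X Y) (face_pt k y)) (psis_field a b (vedge_pt X y)))"
proof -
  have ab: "a < b" using assms by simp
  have "k \<le> b" "a \<le> k + 1" "k + 1 \<le> b" using assms by auto
  note fields = psi_field_hedge_pt[OF assms(1,2)] psi_field_vedge_pt[OF assms(1) \<open>k \<le> b\<close>]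
    psi_field_vedge_pt[OF \<open>a \<le> k + 1\<close> \<open>k + 1 \<le> b\<close>]
    psi_gen_eq_flip_comb[OF assms(1,2)] op_conj_add1[OF op_inverse_Tmat[OF ab]] op_conj_Tmat_1_flip_comb[OF ab]
  from X Y show ?thesis
  proof (elim disjE)
    assume "X = k" "Y = y"
    show ?thesis unfolding \<open>X = k\<close> \<open>Y = y\<close> fields corner_eta_face
      by (intro op_conj_flip_comb_relation) (use vert_coeff_corner_BL[OF assms(1,2)] in auto)
  next
    assume "X = k" "Y = y + 1"
    show ?thesis unfolding \<open>X = k\<close> \<open>Y = y + 1\<close> fields corner_eta_face
      by (intro op_conj_flip_comb_relation) (use vert_coeff_corner_TL[OF assms(1,2)] in auto)
  next
    assume "X = k + 1" "Y = y"
    show ?thesis unfolding \<open>X = k + 1\<close> \<open>Y = y\<close> fields corner_eta_face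
      by (intro op_conj_flip_comb_relation) (use vert_coeff_corner_BR[OF assms(1,2)] in auto)
  next
    assume "X = k + 1" "Y = y + 1"
    show ?thesis unfolding \<open>X = k + 1\<close> \<open>Y = y + 1\<close> fields corner_eta_face
      by (intro op_conj_flip_comb_relation) (use vert_coeff_corner_TR[OF assms(1,2)] in auto)
  qed
qed

lemma corner_relation_psi_field:
  assumes "corner_pair a b z1 z2 v p"
  shows "op_add (psi_field a b z1) (op_scale (corner_eta v p) (psis_field a b z1))
       = op_add (psi_field a b z2) (op_scale (corner_eta v p) (psis_field a b z2))"
proof -
  from assms obtain k y X Y where kyXY: "a \<le> k" "k < b" "p = face_pt k y" "v = vertex_pt X Y"
    "X = k \<or> X = k + 1" "Y = y \<or> Y = y + 1"
    and "z1 = hedge_pt k Y \<or> z1 = vedge_pt X y" "z2 = hedge_pt k Y \<or> z2 = vedge_pt X y"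
    by (rule corner_pair_cases)
  with psi_field_corner[OF kyXY(1,2,5,6)] show ?thesis by auto
qed

lemma psi_field_in_CliffGen:
  assumes "a < b" and "edge a b z"
  shows "psi_field a b z \<in> CliffGen a b \<and> psis_field a b z \<in> CliffGen a b"
  using assms(2)
proof (cases rule: edge_cases)
  case (hedge k y)
  then show ?thesis
    using op_conj_Tmat_flip_comb[OF assms(1)] flip_comb_in_CliffGen
    by (metis psi_field_hedge_pt psi_gen_eq_flip_comb)
next
  case (vedge x y)
  then show ?thesis
    using op_conj_Tmat_flip_comb[OF assms(1)] flip_comb_in_CliffGen
    by (metis psi_field_vedge_pt)
qed

lemma psi_field_boundary:
  assumes "a < b"
  shows "op_add (psi_field a b (vedge_pt a y)) (op_scale \<i> (psis_field a b (vedge_pt a y))) = op_zero"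
    and "op_add (psi_field a b (vedge_pt b y)) (op_scale (- \<i>) (psis_field a b (vedge_pt b y))) = op_zero"
proof -
  have "a \<le> a" "a \<le> b" "b \<le> b" using assms by auto
  then show "op_add (psi_field a b (vedge_pt a y)) (op_scale \<i> (psis_field a b (vedge_pt a y))) = op_zero"
    "op_add (psi_field a b (vedge_pt b y)) (op_scale (- \<i>) (psis_field a b (vedge_pt b y))) = op_zero"
    unfolding psi_field_vedge_pt[OF \<open>a \<le> a\<close> \<open>a \<le> b\<close>] psi_field_vedge_pt[OF \<open>a \<le> b\<close> \<open>b \<le> b\<close>]
      op_conj_op_scale[symmetric] op_conj_op_add[symmetric] op_add_flip_comb
    using vert_coeff_boundary[OF assms] by (simp_all add: flip_comb_zero op_conj_op_zero)
qed

lemma fermion_conds_psi_field: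
  assumes "a < b"
  shows "fermion_conds a b (psi_field a b) (psis_field a b)"
  unfolding fermion_conds_def
proof (intro conjI allI impI)
  fix z assume "\<not> edge a b z"
  then show "psi_field a b z = op_zero" "psis_field a b z = op_zero"
    unfolding psi_field_def psis_field_def edge_def by auto
next
  fix z assume "edge a b z"
  then show "psi_field a b z \<in> CliffGen a b" "psis_field a b z \<in> CliffGen a b"
    using psi_field_in_CliffGen[OF assms] by blast+
next
  fix k y :: int assume "a \<le> k \<and> k < b"
  then show "psi_field a b (hedge_pt k y)
      = op_mult a b (op_zpow a b (Tmat a b) (- y)) (op_mult a b (psi_gen a b k) (op_zpow a b (Tmat a b) y))"
    "psis_field a b (hedge_pt k y)
      = op_mult a b (op_zpow a b (Tmat a b) (- y)) (op_mult a b (psis_gen a b k) (op_zpow a b (Tmat a b) y))"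
    by (simp_all add: psi_field_hedge_pt op_conj_def)
next
  fix z1 z2 v p assume "corner_pair a b z1 z2 v p"
  then show "op_add (psi_field a b z1) (op_scale (corner_eta v p) (psis_field a b z1))
      = op_add (psi_field a b z2) (op_scale (corner_eta v p) (psis_field a b z2))"
    by (rule corner_relation_psi_field)
next
  fix y :: int
  show "op_add (psi_field a b (vedge_pt a y)) (op_scale \<i> (psis_field a b (vedge_pt a y))) = op_zero"
    "op_add (psi_field a b (vedge_pt b y)) (op_scale (- \<i>) (psis_field a b (vedge_pt b y))) = op_zero"
    by (rule psi_field_boundary[OF assms])+
qed

lemma eq_if_two_combinations_eq:
  fixes u w u' w' e1 e2 :: "'a::field"
  assumes "u + e1 * w = u' + e1 * w'" and "u + e2 * w = u' + e2 * w'" and "e1 \<noteq> e2"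
  shows "u = u' \<and> w = w'"
proof -
  have "(u + e1 * w) - (u + e2 * w) = (u' + e1 * w') - (u' + e2 * w')" using assms(1,2) by simp
  then have "(e1 - e2) * w = (e1 - e2) * w'" by (simp add: algebra_simps)
  with assms show ?thesis by simp
qed

lemma eta_BL_neq_eta_TL: "eta_BL \<noteq> eta_TL"
  and eta_BR_neq_eta_TR: "eta_BR \<noteq> eta_TR"
  unfolding eta_BL_def eta_TL_def eta_BR_def eta_TR_def by (simp_all add: complex_eq_iff)

lemma op_add_op_scale_eqD:
  assumes "op_add A (op_scale c B) = op_add A' (op_scale c B')"
  shows "A \<tau> \<rho> + c * B \<tau> \<rho> = A' \<tau> \<rho> + c * B' \<tau> \<rho>"
  using fun_cong[OF fun_cong[OF assms, of \<tau>], of \<rho>] unfolding op_add_def op_scale_def .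

lemma fermion_conds_unique:
  assumes "a < b" and F: "fermion_conds a b f g" and F': "fermion_conds a b f' g'"
  shows "f = f' \<and> g = g'"
proof -
  have corner: "h z1 \<tau> \<rho> + corner_eta v p * h' z1 \<tau> \<rho> = h z2 \<tau> \<rho> + corner_eta v p * h' z2 \<tau> \<rho>"
    if "fermion_conds a b h h'" "corner_pair a b z1 z2 v p" for h h' z1 z2 v p \<tau> \<rho>
  proof -
    have "op_add (h z1) (op_scale (corner_eta v p) (h' z1)) = op_add (h z2) (op_scale (corner_eta v p) (h' z2))"
      using that unfolding fermion_conds_def by blast
    then show ?thesis by (rule op_add_op_scale_eqD)
  qed
  have hedge: "f (hedge_pt k y) = f' (hedge_pt k y) \<and> g (hedge_pt k y) = g' (hedge_pt k y)"
    if "a \<le> k" "k < b" for k y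
    using that F F' unfolding fermion_conds_def by auto
  have vedge: "f (vedge_pt x y) \<tau> \<rho> = f' (vedge_pt x y) \<tau> \<rho> \<and> g (vedge_pt x y) \<tau> \<rho> = g' (vedge_pt x y) \<tau> \<rho>"
    if "a \<le> x" "x \<le> b" for x y \<tau> \<rho>
  proof -
    define k where "k = (if x < b then x else x - 1)"
    have k: "a \<le> k" "k < b" "x = k \<or> x = k + 1" using that assms(1) unfolding k_def by auto
    let ?e1 = "corner_eta (vertex_pt x y) (face_pt k y)" and ?e2 = "corner_eta (vertex_pt x (y + 1)) (face_pt k y)"
    have cp: "corner_pair a b (hedge_pt k y) (vedge_pt x y) (vertex_pt x y) (face_pt k y)"
      "corner_pair a b (hedge_pt k (y + 1)) (vedge_pt x y) (vertex_pt x (y + 1)) (face_pt k y)"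
      using k by (intro corner_pairI; simp)+
    have "?e1 \<noteq> ?e2" using k(3) corner_eta_face eta_BL_neq_eta_TL eta_BR_neq_eta_TR by auto
    moreover have "f (vedge_pt x y) \<tau> \<rho> + ?e1 * g (vedge_pt x y) \<tau> \<rho> = f' (vedge_pt x y) \<tau> \<rho> + ?e1 * g' (vedge_pt x y) \<tau> \<rho>"
      using corner[OF F cp(1)] corner[OF F' cp(1)] hedge[OF k(1,2), of y] by simp
    moreover have "f (vedge_pt x y) \<tau> \<rho> + ?e2 * g (vedge_pt x y) \<tau> \<rho> = f' (vedge_pt x y) \<tau> \<rho> + ?e2 * g' (vedge_pt x y) \<tau> \<rho>"
      using corner[OF F cp(2)] corner[OF F' cp(2)] hedge[OF k(1,2), of "y + 1"] by simp
    ultimately show ?thesis using eq_if_two_combinations_eq by blast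
  qed
  have "f z = f' z \<and> g z = g' z" for z
  proof (cases "edge a b z")
    case True
    then show ?thesis by (cases rule: edge_cases) (use hedge vedge in \<open>auto simp: fun_eq_iff\<close>)
  next
    case False
    then show ?thesis using F F' unfolding fermion_conds_def by simp
  qed
  then show ?thesis by auto
qed

lemma fermions_eq_psi_field:
  assumes "a < b"
  shows "fermions a b = (psi_field a b, psis_field a b)"
  unfolding fermions_def
proof (rule the_equality)
  show "fermion_conds a b (fst (psi_field a b, psis_field a b)) (snd (psi_field a b, psis_field a b))"
    using fermion_conds_psi_field[OF assms] by simp
next
  fix fg assume "fermion_conds a b (fst fg) (snd fg)"
  then show "fg = (psi_field a b, psis_field a b)"
    using fermion_conds_unique[OF assms _ fermion_conds_psi_field[OF assms]] by (simp add: prod_eq_iff)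
qed

section \<open>Closedness of the plaquette integrals\<close>

lemma sum_atLeastAtMost_1_4: "(\<Sum>j\<in>{1..4::nat}. F j) = F 1 + F 2 + F 3 + (F 4 :: 'a::comm_monoid_add)"
  by (simp add: numeral_eq_Suc add.assoc)

lemma sum_rotate_4:
  fixes G :: "nat \<Rightarrow> 'a::comm_monoid_add"
  assumes "r < 4"
  shows "(\<Sum>j\<in>{1..4}. G ((j - 1 + r) mod 4)) = G 0 + G 1 + G 2 + G 3"
proof -
  have "r = 0 \<or> r = 1 \<or> r = 2 \<or> r = 3" using assms by auto
  then show ?thesis unfolding sum_atLeastAtMost_1_4 by (elim disjE) (simp_all add: ac_simps Suc_1 Suc_numeral flip: One_nat_def)
qed

definition edge_term ::
  "(complex \<Rightarrow> complex) \<Rightarrow> (complex \<Rightarrow> complex) \<Rightarrow> (complex \<Rightarrow> complex) \<Rightarrow> (complex \<Rightarrow> complex) \<Rightarrow> complex \<Rightarrow> complex \<Rightarrow> complex"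
  where "edge_term m ms f g w w' =
    m ((w + w') / 2) * f ((w + w') / 2) * (w' - w) + ms ((w + w') / 2) * g ((w + w') / 2) * cnj (w' - w)"

lemma plaq_w_mod_4: "plaq_w p r j = plaq_w p 0 ((j + r) mod 4)"
proof -
  have "\<i> ^ n = \<i> ^ (n mod 4)" for n
  proof -
    have "\<i> ^ 4 = (1::complex)" by (simp add: numeral_eq_Suc)
    have "\<i> ^ n = \<i> ^ (4 * (n div 4) + n mod 4)" by simp
    also have "\<dots> = (\<i> ^ 4) ^ (n div 4) * \<i> ^ (n mod 4)" by (simp only: power_add power_mult)
    finally show ?thesis using \<open>\<i> ^ 4 = 1\<close> by simp
  qed
  then show ?thesis unfolding plaq_w_def by simp
qed

lemma plaq_w_face_pt:
  "plaq_w (face_pt k y) 0 0 = vertex_pt k y" "plaq_w (face_pt k y) 0 1 = vertex_pt (k + 1) y"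
  "plaq_w (face_pt k y) 0 2 = vertex_pt (k + 1) (y + 1)" "plaq_w (face_pt k y) 0 3 = vertex_pt k (y + 1)"
  unfolding plaq_w_def by (simp_all add: complex_eq_iff numeral_eq_Suc)

lemma plaquette_integral_face_pt:
  assumes "r < 4"
  shows "plaquette_integral m ms \<psi> \<psi>s (face_pt k y) r \<tau> \<rho> =
      edge_term m ms (\<lambda>z. \<psi> z \<tau> \<rho>) (\<lambda>z. \<psi>s z \<tau> \<rho>) (vertex_pt k y) (vertex_pt (k + 1) y)
    + edge_term m ms (\<lambda>z. \<psi> z \<tau> \<rho>) (\<lambda>z. \<psi>s z \<tau> \<rho>) (vertex_pt (k + 1) y) (vertex_pt (k + 1) (y + 1))
    + edge_term m ms (\<lambda>z. \<psi> z \<tau> \<rho>) (\<lambda>z. \<psi>s z \<tau> \<rho>) (vertex_pt (k + 1) (y + 1)) (vertex_pt k (y + 1))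
    + edge_term m ms (\<lambda>z. \<psi> z \<tau> \<rho>) (\<lambda>z. \<psi>s z \<tau> \<rho>) (vertex_pt k (y + 1)) (vertex_pt k y)"
proof -
  let ?p = "face_pt k y"
  let ?G = "\<lambda>q. edge_term m ms (\<lambda>z. \<psi> z \<tau> \<rho>) (\<lambda>z. \<psi>s z \<tau> \<rho>) (plaq_w ?p 0 q) (plaq_w ?p 0 (Suc q mod 4))"
  have "plaquette_integral m ms \<psi> \<psi>s ?p r \<tau> \<rho> = (\<Sum>j\<in>{1..4}. ?G ((j - 1 + r) mod 4))"
    unfolding plaquette_integral_def
  proof (intro sum.cong refl)
    fix j :: nat assume "j \<in> {1..4}"
    then have "plaq_w ?p r (j - 1) = plaq_w ?p 0 ((j - 1 + r) mod 4)"
      "plaq_w ?p r j = plaq_w ?p 0 (Suc ((j - 1 + r) mod 4) mod 4)"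
      by (simp_all add: plaq_w_mod_4[of ?p r] mod_Suc_eq Suc_diff_le)
    then show "m (plaq_z ?p r j) * \<psi> (plaq_z ?p r j) \<tau> \<rho> * (plaq_w ?p r j - plaq_w ?p r (j - 1)) +
        ms (plaq_z ?p r j) * \<psi>s (plaq_z ?p r j) \<tau> \<rho> * cnj (plaq_w ?p r j - plaq_w ?p r (j - 1))
      = ?G ((j - 1 + r) mod 4)"
      unfolding edge_term_def plaq_z_def by simp
  qed
  also have "\<dots> = ?G 0 + ?G 1 + ?G 2 + ?G 3"
    by (rule sum_rotate_4[OF assms])
  also have "\<dots> =
      edge_term m ms (\<lambda>z. \<psi> z \<tau> \<rho>) (\<lambda>z. \<psi>s z \<tau> \<rho>) (vertex_pt k y) (vertex_pt (k + 1) y)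
    + edge_term m ms (\<lambda>z. \<psi> z \<tau> \<rho>) (\<lambda>z. \<psi>s z \<tau> \<rho>) (vertex_pt (k + 1) y) (vertex_pt (k + 1) (y + 1))
    + edge_term m ms (\<lambda>z. \<psi> z \<tau> \<rho>) (\<lambda>z. \<psi>s z \<tau> \<rho>) (vertex_pt (k + 1) (y + 1)) (vertex_pt k (y + 1))
    + edge_term m ms (\<lambda>z. \<psi> z \<tau> \<rho>) (\<lambda>z. \<psi>s z \<tau> \<rho>) (vertex_pt k (y + 1)) (vertex_pt k y)"
  proof -
    have "Suc 0 mod 4 = 1" "Suc 1 mod 4 = 2" "Suc 2 mod 4 = 3" "Suc 3 mod 4 = (0::nat)"
      by simp_all
    then show ?thesis by (simp only: plaq_w_face_pt)
  qed
  finally show ?thesis .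
qed

lemma face_side_midpoints:
  "(vertex_pt k y + vertex_pt (k + 1) y) / 2 = hedge_pt k y" "vertex_pt (k + 1) y - vertex_pt k y = 1"
  "(vertex_pt (k + 1) y + vertex_pt (k + 1) (y + 1)) / 2 = vedge_pt (k + 1) y"
  "vertex_pt (k + 1) (y + 1) - vertex_pt (k + 1) y = \<i>"
  "(vertex_pt (k + 1) (y + 1) + vertex_pt k (y + 1)) / 2 = hedge_pt k (y + 1)"
  "vertex_pt k (y + 1) - vertex_pt (k + 1) (y + 1) = - 1"
  "(vertex_pt k (y + 1) + vertex_pt k y) / 2 = vedge_pt k y" "vertex_pt k y - vertex_pt k (y + 1) = - \<i>"
  by (simp_all add: complex_eq_iff)

lemma edge_term_face_sides:
  "edge_term m ms f g (vertex_pt k y) (vertex_pt (k + 1) y)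
    = m (hedge_pt k y) * f (hedge_pt k y) + ms (hedge_pt k y) * g (hedge_pt k y)"
  "edge_term m ms f g (vertex_pt (k + 1) y) (vertex_pt (k + 1) (y + 1))
    = \<i> * (m (vedge_pt (k + 1) y) * f (vedge_pt (k + 1) y) - ms (vedge_pt (k + 1) y) * g (vedge_pt (k + 1) y))"
  "edge_term m ms f g (vertex_pt (k + 1) (y + 1)) (vertex_pt k (y + 1))
    = - (m (hedge_pt k (y + 1)) * f (hedge_pt k (y + 1)) + ms (hedge_pt k (y + 1)) * g (hedge_pt k (y + 1)))"
  "edge_term m ms f g (vertex_pt k (y + 1)) (vertex_pt k y)
    = - \<i> * (m (vedge_pt k y) * f (vedge_pt k y) - ms (vedge_pt k y) * g (vedge_pt k y))"
  unfolding edge_term_def face_side_midpoints by (simp_all add: algebra_simps)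

text \<open>Since \<open>\<eta>\<^sub>B\<^sub>R \<noteq> \<eta>\<^sub>T\<^sub>R\<close> and \<open>\<eta>\<^sub>B\<^sub>L \<noteq> \<eta>\<^sub>T\<^sub>L\<close>, the corner relations express the values on
  the vertical edges through those on the horizontal ones; after this substitution the
  contour sum vanishes identically.\<close>

lemma plaquette_corner_identity:
  fixes fb gb fr gr ft gt fl gl mb nb mr nr mt nt ml nl :: complex
  assumes BL: "fb + eta_BL * gb = fl + eta_BL * gl" "mb - eta_BL * nb = ml - eta_BL * nl"
    and BR: "fb + eta_BR * gb = fr + eta_BR * gr" "mb - eta_BR * nb = mr - eta_BR * nr"
    and TL: "ft + eta_TL * gt = fl + eta_TL * gl" "mt - eta_TL * nt = ml - eta_TL * nl"
    and TR: "ft + eta_TR * gt = fr + eta_TR * gr" "mt - eta_TR * nt = mr - eta_TR * nr"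
  shows "(mb * fb + nb * gb) + \<i> * (mr * fr - nr * gr) + - (mt * ft + nt * gt) + - \<i> * (ml * fl - nl * gl) = 0"
proof -
  have d: "eta_BR - eta_TR = - 2 / sqrt2" "eta_BL - eta_TL = - 2 / sqrt2"
    unfolding eta_BR_def eta_TR_def eta_BL_def eta_TL_def by (simp_all add: field_simps)
  then have nz: "eta_BR - eta_TR \<noteq> 0" "eta_BL - eta_TL \<noteq> 0" by simp_all
  have "(eta_BR - eta_TR) * gr = (fb + eta_BR * gb) - (ft + eta_TR * gt)"
    "(eta_BL - eta_TL) * gl = (fb + eta_BL * gb) - (ft + eta_TL * gt)"
    "(eta_BR - eta_TR) * nr = (mt - eta_TR * nt) - (mb - eta_BR * nb)"
    "(eta_BL - eta_TL) * nl = (mt - eta_TL * nt) - (mb - eta_BL * nb)"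
    unfolding BR(1) TR(1) BL(1) TL(1) BR(2) TR(2) BL(2) TL(2) by (simp_all add: algebra_simps)
  then have vertical_g:
    "gr = ((fb + eta_BR * gb) - (ft + eta_TR * gt)) / (eta_BR - eta_TR)"
    "gl = ((fb + eta_BL * gb) - (ft + eta_TL * gt)) / (eta_BL - eta_TL)"
    "nr = ((mt - eta_TR * nt) - (mb - eta_BR * nb)) / (eta_BR - eta_TR)"
    "nl = ((mt - eta_TL * nt) - (mb - eta_BL * nb)) / (eta_BL - eta_TL)"
    using nz by (simp_all add: eq_divide_eq mult.commute)
  have vertical_f:
    "fr = fb + eta_BR * gb - eta_BR * gr" "fl = fb + eta_BL * gb - eta_BL * gl"
    "mr = mb - eta_BR * nb + eta_BR * nr" "ml = mb - eta_BL * nb + eta_BL * nl"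
    using BR BL by (simp_all add: algebra_simps)
  show ?thesis
    unfolding vertical_f unfolding vertical_g d eta_BR_def eta_TR_def eta_BL_def eta_TL_def
    by (simp add: field_simps sqrt2_squared sqrt2_powers)
qed

lemma plaquette_integral_vanishes:
  assumes corner: "\<And>z1 z2 v p. corner_pair a b z1 z2 v p \<Longrightarrow>
      op_add (\<psi> z1) (op_scale (corner_eta v p) (\<psi>s z1)) = op_add (\<psi> z2) (op_scale (corner_eta v p) (\<psi>s z2))"
    and "ICSH a b m ms" and "face a b p" and "r < 4"
  shows "plaquette_integral m ms \<psi> \<psi>s p r = op_zero"
proof (intro ext)
  fix \<tau> \<rho>
  from \<open>face a b p\<close> obtain k y where k: "a \<le> k" "k < b" and p: "p = face_pt k y"
    unfolding face_def by auto
  have cp: "corner_pair a b (hedge_pt k y) (vedge_pt k y) (vertex_pt k y) (face_pt k y)"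
    "corner_pair a b (hedge_pt k y) (vedge_pt (k + 1) y) (vertex_pt (k + 1) y) (face_pt k y)"
    "corner_pair a b (hedge_pt k (y + 1)) (vedge_pt k y) (vertex_pt k (y + 1)) (face_pt k y)"
    "corner_pair a b (hedge_pt k (y + 1)) (vedge_pt (k + 1) y) (vertex_pt (k + 1) (y + 1)) (face_pt k y)"
    using k by (intro corner_pairI; simp)+
  have field: "\<psi> z1 \<tau> \<rho> + corner_eta v q * \<psi>s z1 \<tau> \<rho> = \<psi> z2 \<tau> \<rho> + corner_eta v q * \<psi>s z2 \<tau> \<rho>"
    if "corner_pair a b z1 z2 v q" for z1 z2 v q
    using corner[OF that] by (rule op_add_op_scale_eqD)
  have coeff: "m z1 - corner_eta v q * ms z1 = m z2 - corner_eta v q * ms z2"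
    if "corner_pair a b z1 z2 v q" for z1 z2 v q
    using \<open>ICSH a b m ms\<close> that unfolding ICSH_def by blast
  note relations = field[OF cp(1)] coeff[OF cp(1)] field[OF cp(2)] coeff[OF cp(2)]
    field[OF cp(3)] coeff[OF cp(3)] field[OF cp(4)] coeff[OF cp(4)]
  show "plaquette_integral m ms \<psi> \<psi>s p r \<tau> \<rho> = op_zero \<tau> \<rho>"
    unfolding p plaquette_integral_face_pt[OF \<open>r < 4\<close>] edge_term_face_sides op_zero_def
    by (rule plaquette_corner_identity[OF relations[unfolded corner_eta_face]])
qed

theorem proposition3p8:
  fixes a b :: int and m ms :: "complex \<Rightarrow> complex"
  assumes "a < 0" and "0 < b" and "ICSH a b m ms"
  shows "closed_form a b m ms (fst (fermions a b)) (snd (fermions a b))"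
proof -
  have ab: "a < b" using assms(1,2) by simp
  have "fermion_conds a b (fst (fermions a b)) (snd (fermions a b))"
    using fermion_conds_psi_field[OF ab] by (simp add: fermions_eq_psi_field[OF ab])
  then have corner: "\<And>z1 z2 v p. corner_pair a b z1 z2 v p \<Longrightarrow>
      op_add (fst (fermions a b) z1) (op_scale (corner_eta v p) (snd (fermions a b) z1))
    = op_add (fst (fermions a b) z2) (op_scale (corner_eta v p) (snd (fermions a b) z2))"
    unfolding fermion_conds_def by blast
  show ?thesis
    unfolding closed_form_def
    using plaquette_integral_vanishes[where \<psi> = "fst (fermions a b)" and \<psi>s = "snd (fermions a b)", OF corner assms(3)]
    by blast
qed

end
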